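(* Let $(\mu_N)_N$ be finite signed Radon measures on $\mathbb{R}^2$ and $\mu$ a non-atomic finite signed Radon measure on $\mathbb{R}^2$. Assume $\mu_N\to\mu$ narrowly and $|\mu_N|\to\nu^d+\nu^a$ narrowly, where $\nu^d$ is non-atomic and $\nu^a=\sum_{j\ge1}\gamma_j\delta_{z_j}$ is purely atomic. Let $Q\in C^0(\mathbb{R}^2\setminus\{0\})$ be bounded, extended to $0$ by a value with $|Q(0)|\le\|Q\|_{L^\infty}$, and suppose the measures $Q(x-y)\,d\mu_N(x)\,d\mu_N(y)$ on $\mathbb{R}^2\times\mathbb{R}^2$ converge narrowly to a measure $m$. Then $$dm=Q(x-y)\,d\mu(x)\,d\mu(y)+\sum_{j\ge1}c_j\,\delta(x-z_j)\delta(y-z_j)$$ with $|c_j|\le\|Q\|_{L^\infty}|\gamma_j|^2$ for all $j$. Furthermore, if $\mu_N\ge0$ for all $N$, then $dm=Q(x-y)\,d\mu(x)\,d\mu(y)$.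
   Context: $|\mu_N|$ is the variation measure. Narrow convergence: convergence against bounded continuous test functions. Since $\mu$ is non-atomic, the diagonal $\{x=y\}$ is $\mu\otimes\mu$-null, so $Q(x-y)\,d\mu\,d\mu$ does not depend on the value of $Q(0)$. *)

theory Defs
  imports "HOL-Analysis.Analysis"
begin

text \<open>A finite signed Borel (= Radon, on R^2) measure is represented by its Jordan
decomposition (P, M): two finite Borel measures that are mutually singular.
The measure is P - M and its variation measure is P + M.\<close>

definition signed_meas :: "'a::topological_space measure \<times> 'a measure \<Rightarrow> bool" where
  "signed_meas \<mu> \<longleftrightarrow>
     sets (fst \<mu>) = sets borel \<and> sets (snd \<mu>) = sets borel \<and>
     finite_measure (fst \<mu>) \<and> finite_measure (snd \<mu>) \<and>
     (\<exists>A\<in>sets borel. emeasure (fst \<mu>) A = 0 \<and> emeasure (snd \<mu>) (UNIV - A) = 0)"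

definition smeas :: "'a measure \<times> 'a measure \<Rightarrow> 'a set \<Rightarrow> real" where
  "smeas \<mu> A = measure (fst \<mu>) A - measure (snd \<mu>) A"

definition sint :: "'a measure \<times> 'a measure \<Rightarrow> ('a \<Rightarrow> real) \<Rightarrow> real" where
  "sint \<mu> f = (\<integral>x. f x \<partial>fst \<mu>) - (\<integral>x. f x \<partial>snd \<mu>)"

definition var_int :: "'a measure \<times> 'a measure \<Rightarrow> ('a \<Rightarrow> real) \<Rightarrow> real" where
  "var_int \<mu> f = (\<integral>x. f x \<partial>fst \<mu>) + (\<integral>x. f x \<partial>snd \<mu>)"

definition sint2 :: "'a measure \<times> 'a measure \<Rightarrow> ('a \<times> 'a \<Rightarrow> real) \<Rightarrow> real" where
  "sint2 \<mu> g =
     (\<integral>p. g p \<partial>(fst \<mu> \<Otimes>\<^sub>M fst \<mu>)) - (\<integral>p. g p \<partial>(fst \<mu> \<Otimes>\<^sub>M snd \<mu>))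
   - (\<integral>p. g p \<partial>(snd \<mu> \<Otimes>\<^sub>M fst \<mu>)) + (\<integral>p. g p \<partial>(snd \<mu> \<Otimes>\<^sub>M snd \<mu>))"

definition s_nonatomic :: "'a measure \<times> 'a measure \<Rightarrow> bool" where
  "s_nonatomic \<mu> \<longleftrightarrow> (\<forall>x. emeasure (fst \<mu>) {x} = 0 \<and> emeasure (snd \<mu>) {x} = 0)"

definition bcont :: "('a::topological_space \<Rightarrow> real) \<Rightarrow> bool" where
  "bcont f \<longleftrightarrow> continuous_on UNIV f \<and> bounded (range f)"

definition Qnorm :: "(real^2 \<Rightarrow> real) \<Rightarrow> real" where
  "Qnorm Q = (SUP x\<in>-{0}. \<bar>Q x\<bar>)"

end

theory Submission
  imports Defs
begin

text \<open>
  Let \<open>\<nu> = \<nu>\<^sup>d + \<nu>\<^sup>a\<close> be the narrow limit of \<open>|\<mu>\<^sub>N|\<close>. Narrow convergence of \<open>\<mu>\<^sub>N\<close> and of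
  \<open>|\<mu>\<^sub>N|\<close>, together with the tightness that the latter implies, passes to the products
  \<open>\<mu>\<^sub>N \<otimes> \<mu>\<^sub>N\<close> and \<open>|\<mu>\<^sub>N| \<otimes> |\<mu>\<^sub>N|\<close>: on compact sets a bounded continuous test function is
  uniformly close to a polynomial, i.e. to a finite sum of tensor products \<open>a(x) b(y)\<close>, whose
  integrals factor.

  Replace \<open>Q\<close> by the continuous kernel \<open>Q(v) min(1, |v|/d)\<close>. The defect
  \<open>D = m - Q(x - y) \<mu> \<otimes> \<mu>\<close> tested against \<open>f\<close> is then at most
  \<open>sup |Q| \<integral> (1 - min(1, |x - y|/d)) |f| d(\<nu> \<otimes> \<nu>)\<close>, and as \<open>d \<rightarrow> 0\<close>, since \<open>\<mu> \<otimes> \<mu>\<close>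
  does not charge the diagonal, \<open>|D(f)| \<le> sup |Q| \<integral>\<^bsub>x = y\<^esub> |f| d(\<nu> \<otimes> \<nu>)\<close>. Approximating
  indicators of closed sets and using inner regularity gives
  \<open>|D(A)| \<le> sup |Q| (\<nu> \<otimes> \<nu>)(A \<inter> diagonal)\<close> for Borel \<open>A\<close>. On the diagonal \<open>\<nu> \<otimes> \<nu>\<close> lives
  on the points \<open>(z\<^sub>j, z\<^sub>j)\<close>, with masses \<open>\<gamma>\<^sub>j\<^sup>2\<close>, so \<open>D\<close> is the sum of its atoms
  \<open>c\<^sub>j = D{(z\<^sub>j, z\<^sub>j)}\<close>. If all \<open>\<mu>\<^sub>N \<ge> 0\<close> then \<open>|\<mu>\<^sub>N| = \<mu>\<^sub>N\<close>, so \<open>\<nu> = \<mu>\<close> has no atoms and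
  every \<open>\<gamma>\<^sub>j\<close> vanishes.
\<close>

section \<open>Finite Borel measures and bounded Borel functions\<close>

definition finite_borel :: "'a::topological_space measure \<Rightarrow> bool" where
  "finite_borel M \<longleftrightarrow> sets M = sets borel \<and> finite_measure M"

definition bounded_borel :: "('a::topological_space \<Rightarrow> real) \<Rightarrow> bool" where
  "bounded_borel f \<longleftrightarrow> f \<in> borel_measurable borel \<and> (\<exists>B. \<forall>x. \<bar>f x\<bar> \<le> B)"

lemma finite_borel_space: "finite_borel M \<Longrightarrow> space M = UNIV"
  unfolding finite_borel_def by (metis sets_eq_imp_space_eq space_borel)

lemma finite_borel_measurable:
  "finite_borel M \<Longrightarrow> f \<in> borel_measurable borel \<Longrightarrow> f \<in> borel_measurable M"
  unfolding finite_borel_def using measurable_cong_sets[of M borel borel borel] by auto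

lemma finite_borel_integrable:
  assumes "finite_borel M" "bounded_borel f"
  shows "integrable M f"
proof -
  interpret finite_measure M using assms(1) by (simp add: finite_borel_def)
  obtain B where "\<And>x. \<bar>f x\<bar> \<le> B" using assms(2) by (auto simp: bounded_borel_def)
  then have "AE x in M. norm (f x) \<le> B" by simp
  moreover have "f \<in> borel_measurable M"
    using assms by (auto simp: bounded_borel_def intro: finite_borel_measurable)
  ultimately show ?thesis by (rule integrable_const_bound)
qed

lemma finite_borel_pair:
  fixes A :: "'a::second_countable_topology measure" and B :: "'b::second_countable_topology measure"
  assumes "finite_borel A" "finite_borel B"
  shows "finite_borel (A \<Otimes>\<^sub>M B)"
proof -
  have "sets (A \<Otimes>\<^sub>M B) = sets (borel \<Otimes>\<^sub>M borel)"
    using assms by (intro sets_pair_measure_cong) (simp_all add: finite_borel_def)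
  then have "sets (A \<Otimes>\<^sub>M B) = sets borel" using borel_prod[where 'a='a and 'b='b] by metis
  moreover have "finite_measure (A \<Otimes>\<^sub>M B)"
    using assms by (intro finite_measure_pair_measure) (simp_all add: finite_borel_def)
  ultimately show ?thesis by (simp add: finite_borel_def)
qed

lemma finite_borel_measure_mono:
  "finite_borel M \<Longrightarrow> A \<subseteq> B \<Longrightarrow> B \<in> sets borel \<Longrightarrow> measure M A \<le> measure M B"
  using finite_measure.finite_measure_mono[of M A B] by (simp add: finite_borel_def)

lemma finite_borel_measure_Diff:
  "finite_borel M \<Longrightarrow> A \<in> sets borel \<Longrightarrow> B \<in> sets borel \<Longrightarrow> B \<subseteq> A \<Longrightarrow>
    measure M (A - B) = measure M A - measure M B"
  using finite_measure.finite_measure_Diff[of M A B] by (simp add: finite_borel_def)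

lemma finite_borel_integral_indicator:
  "finite_borel M \<Longrightarrow> integral\<^sup>L M (indicator A :: _ \<Rightarrow> real) = measure M A"
  by (simp add: finite_borel_space)

lemma bounded_borelI: "f \<in> borel_measurable borel \<Longrightarrow> (\<And>x. \<bar>f x\<bar> \<le> B) \<Longrightarrow> bounded_borel f"
  unfolding bounded_borel_def by blast

lemma bounded_borel_measurable: "bounded_borel f \<Longrightarrow> f \<in> borel_measurable borel"
  by (simp add: bounded_borel_def)

lemma bounded_borel_const: "bounded_borel (\<lambda>x. c)"
  by (rule bounded_borelI[of _ "\<bar>c\<bar>"]) auto

lemma bounded_borel_indicator: "A \<in> sets borel \<Longrightarrow> bounded_borel (indicator A)"
  by (rule bounded_borelI[of _ 1]) (auto simp: indicator_def)

lemma bcont_bounded_borel: "bcont f \<Longrightarrow> bounded_borel f"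
  unfolding bcont_def bounded_borel_def
  by (auto intro: borel_measurable_continuous_onI simp: bounded_real)

lemma bounded_borel_add:
  assumes "bounded_borel f" "bounded_borel g"
  shows "bounded_borel (\<lambda>x. f x + g x)"
proof -
  obtain B C where "\<And>x. \<bar>f x\<bar> \<le> B" "\<And>x. \<bar>g x\<bar> \<le> C"
    using assms by (auto simp: bounded_borel_def)
  then have "\<bar>f x + g x\<bar> \<le> B + C" for x
    by (meson abs_triangle_ineq add_mono order_trans)
  then show ?thesis using assms by (intro bounded_borelI) (auto simp: bounded_borel_def)
qed

lemma bounded_borel_mult:
  assumes "bounded_borel f" "bounded_borel g"
  shows "bounded_borel (\<lambda>x. f x * g x)"
proof -
  obtain B C where "\<And>x. \<bar>f x\<bar> \<le> B" "\<And>x. \<bar>g x\<bar> \<le> C"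
    using assms by (auto simp: bounded_borel_def)
  then have "\<bar>f x * g x\<bar> \<le> B * C" for x
    by (simp add: abs_mult mult_mono')
  then show ?thesis using assms by (intro bounded_borelI) (auto simp: bounded_borel_def)
qed

lemma bounded_borel_diff:
  assumes "bounded_borel f" "bounded_borel g"
  shows "bounded_borel (\<lambda>x. f x - g x)"
  using bounded_borel_add[OF assms(1) bounded_borel_mult[OF bounded_borel_const[of "-1"] assms(2)]]
  by simp

lemma bounded_borel_abs: "bounded_borel f \<Longrightarrow> bounded_borel (\<lambda>x. \<bar>f x\<bar>)"
  unfolding bounded_borel_def by auto

lemma bounded_borel_fst:
  fixes f :: "'a::second_countable_topology \<Rightarrow> real"
  assumes "bounded_borel f"
  shows "bounded_borel (\<lambda>p::'a \<times> 'b::second_countable_topology. f (fst p))"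
proof -
  have "f \<in> borel_measurable borel" using assms by (rule bounded_borel_measurable)
  then have "(\<lambda>p::'a \<times> 'b. f (fst p)) \<in> borel_measurable (borel \<Otimes>\<^sub>M borel)" by measurable
  then show ?thesis using assms by (auto simp: bounded_borel_def borel_prod)
qed

lemma bounded_borel_snd:
  fixes f :: "'b::second_countable_topology \<Rightarrow> real"
  assumes "bounded_borel f"
  shows "bounded_borel (\<lambda>p::'a::second_countable_topology \<times> 'b. f (snd p))"
proof -
  have "f \<in> borel_measurable borel" using assms by (rule bounded_borel_measurable)
  then have "(\<lambda>p::'a \<times> 'b. f (snd p)) \<in> borel_measurable (borel \<Otimes>\<^sub>M borel)" by measurable
  then show ?thesis using assms by (auto simp: bounded_borel_def borel_prod)
qed

lemmas bounded_borel_intros =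
  bounded_borel_const bounded_borel_add bounded_borel_diff bounded_borel_mult bounded_borel_abs
  bounded_borel_fst bounded_borel_snd bounded_borel_indicator

lemma integral_tensor:
  fixes A :: "'a::second_countable_topology measure" and B :: "'b::second_countable_topology measure"
  assumes A: "finite_borel A" and B: "finite_borel B" and "bounded_borel a" "bounded_borel b"
  shows "(\<integral>p. a (fst p) * b (snd p) \<partial>(A \<Otimes>\<^sub>M B)) = integral\<^sup>L A a * integral\<^sup>L B b"
proof -
  interpret A: finite_measure A using A by (simp add: finite_borel_def)
  interpret B: finite_measure B using B by (simp add: finite_borel_def)
  interpret pair_sigma_finite A B ..
  have "integrable (A \<Otimes>\<^sub>M B) (\<lambda>p. a (fst p) * b (snd p))"
    using assms by (intro finite_borel_integrable finite_borel_pair bounded_borel_intros)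
  then have "(\<integral>p. a (fst p) * b (snd p) \<partial>(A \<Otimes>\<^sub>M B)) = (\<integral>x. (\<integral>y. a x * b y \<partial>B) \<partial>A)"
    using integral_fst[of "\<lambda>x y. a x * b y"] by (simp add: case_prod_beta')
  then show ?thesis by simp
qed

lemma integral_abs_le_integral:
  fixes f :: "_ \<Rightarrow> real"
  assumes "integrable M g" "\<And>x. \<bar>f x\<bar> \<le> g x"
  shows "\<bar>integral\<^sup>L M f\<bar> \<le> integral\<^sup>L M g"
proof (cases "integrable M f")
  case True
  then have "integral\<^sup>L M (\<lambda>x. \<bar>f x\<bar>) \<le> integral\<^sup>L M g"
    using assms by (intro integral_mono) auto
  moreover have "\<bar>integral\<^sup>L M f\<bar> \<le> integral\<^sup>L M (\<lambda>x. \<bar>f x\<bar>)"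
    using integral_norm_bound[of M f] by simp
  ultimately show ?thesis by linarith
next
  case False
  have "0 \<le> g x" for x using assms(2)[of x] by linarith
  then show ?thesis using False by (simp add: not_integrable_integral_eq)
qed

lemma finite_borel_measure_Times:
  fixes X Y :: "'a::second_countable_topology measure"
  assumes X: "finite_borel X" and Y: "finite_borel Y" and A: "A \<in> sets borel" and B: "B \<in> sets borel"
  shows "measure (X \<Otimes>\<^sub>M Y) (A \<times> B) = measure X A * measure Y B"
proof -
  interpret X: finite_measure X using X by (simp add: finite_borel_def)
  interpret Y: finite_measure Y using Y by (simp add: finite_borel_def)
  have "emeasure (X \<Otimes>\<^sub>M Y) (A \<times> B) = emeasure X A * emeasure Y B"
    using A B X Y by (intro Y.emeasure_pair_measure_Times) (simp_all add: finite_borel_def)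
  also have "\<dots> = ennreal (measure X A * measure Y B)"
    by (simp add: X.emeasure_eq_measure Y.emeasure_eq_measure ennreal_mult)
  finally show ?thesis by (simp add: measure_def)
qed

lemma integral_null_measure:
  assumes "\<And>A. emeasure X A = 0"
  shows "integral\<^sup>L X f = (0::real)"
proof (rule integral_eq_zero_AE)
  have "space X \<in> null_sets X" using assms by (intro null_setsI) auto
  then show "AE x in X. f x = 0" by (rule AE_I') auto
qed

lemma inner_regular_finite_borel:
  fixes X :: "'a::{second_countable_topology, complete_space} measure"
  assumes X: "finite_borel X" and A: "A \<in> sets borel" and e: "0 < e"
  shows "\<exists>K. compact K \<and> K \<subseteq> A \<and> measure X (A - K) < e"
proof (cases "measure X A < e")
  case True
  then show ?thesis by (intro exI[of _ "{}"]) auto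
next
  case False
  interpret finite_measure X using X by (simp add: finite_borel_def)
  have sX: "sets X = sets borel" using X by (simp add: finite_borel_def)
  have "ennreal (measure X A - e) < ennreal (measure X A)"
    using False e by (subst ennreal_less_iff) auto
  also have "\<dots> = (SUP K \<in> {K. K \<subseteq> A \<and> compact K}. emeasure X K)"
    using inner_regular[OF sX _ A] by (simp add: emeasure_eq_measure)
  finally obtain K where K: "K \<subseteq> A" "compact K" "ennreal (measure X A - e) < emeasure X K"
    unfolding less_SUP_iff by blast
  then have "measure X A - e < measure X K"
    using False e by (subst (asm) emeasure_eq_measure) (subst (asm) ennreal_less_iff, auto)
  moreover have "K \<in> sets borel" using K(2) by (simp add: borel_compact)
  ultimately have "measure X (A - K) < e"
    using finite_borel_measure_Diff[OF X A _ K(1)] by simp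
  then show ?thesis using K by blast
qed

lemma inner_regular_finite_borel_simultaneous:
  fixes \<M> :: "'a::{second_countable_topology, complete_space} measure set"
  assumes "finite \<M>" "\<And>X. X \<in> \<M> \<Longrightarrow> finite_borel X" and A: "A \<in> sets borel" and e: "0 < e"
  shows "\<exists>K. compact K \<and> K \<subseteq> A \<and> (\<forall>X\<in>\<M>. measure X (A - K) < e)"
  using assms(1,2)
proof (induction \<M> rule: finite_induct)
  case empty
  then show ?case by (intro exI[of _ "{}"]) auto
next
  case (insert Y \<M>)
  then obtain K1 where K1: "compact K1" "K1 \<subseteq> A" "\<forall>X\<in>\<M>. measure X (A - K1) < e" by auto
  obtain K2 where K2: "compact K2" "K2 \<subseteq> A" "measure Y (A - K2) < e"
    using inner_regular_finite_borel[of Y A e] insert.prems A e by auto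
  have Kb: "A - K \<in> sets borel" if "compact K" for K
    using A that by (auto simp: borel_compact)
  have "measure X (A - (K1 \<union> K2)) < e" if X: "X \<in> insert Y \<M>" for X
  proof -
    have fX: "finite_borel X" using X insert.prems by blast
    have le: "measure X (A - (K1 \<union> K2)) \<le> measure X (A - K)" if "K \<in> {K1, K2}" for K
      using that K1(1) K2(1) by (intro finite_borel_measure_mono[OF fX _ Kb]) auto
    from X consider "X = Y" | "X \<in> \<M>" by blast
    then show ?thesis using K1(3) K2(3) le[of K1] le[of K2] by cases auto
  qed
  then show ?case using K1 K2 by (intro exI[of _ "K1 \<union> K2"]) auto
qed

lemma finite_borel_tail:
  fixes M :: "'a::real_normed_vector measure"
  assumes M: "finite_borel M" and e: "0 < e"
  shows "\<exists>R. measure M (- cball 0 R) < e"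
proof -
  interpret finite_measure M using M by (simp add: finite_borel_def)
  have "(\<lambda>n. measure M (- cball 0 (real n))) \<longlonglongrightarrow> measure M (\<Inter>n. - cball 0 (real n))"
  proof (rule finite_Lim_measure_decseq)
    have "- cball (0::'a) (real n) \<in> sets borel" for n
      by (intro borel_comp borel_closed closed_cball)
    then show "range (\<lambda>n. - cball 0 (real n)) \<subseteq> sets M"
      using M unfolding finite_borel_def by blast
    show "decseq (\<lambda>n. - cball (0::'a) (real n))"
      unfolding decseq_def by auto
  qed
  moreover have "(\<Inter>n. - cball (0::'a) (real n)) = {}"
  proof -
    have "x \<notin> (\<Inter>n. - cball 0 (real n))" for x :: 'a
    proof -
      obtain n where "norm x \<le> real n" using real_arch_simple by blast
      then show ?thesis by auto
    qed
    then show ?thesis by blast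
  qed
  ultimately have "(\<lambda>n. measure M (- cball 0 (real n))) \<longlonglongrightarrow> 0" by simp
  from LIMSEQ_D[OF this e] obtain n where "\<forall>n'\<ge>n. norm (measure M (- cball 0 (real n')) - 0) < e"
    by blast
  then have "measure M (- cball 0 (real n)) < e" by auto
  then show ?thesis by blast
qed

lemma finite_borel_tail_antimono:
  "finite_borel M \<Longrightarrow> R \<le> R' \<Longrightarrow> measure M (- cball 0 R') \<le> measure M (- cball 0 R)"
  by (rule finite_borel_measure_mono) auto

lemma uniform_bound_from_eventual:
  fixes \<phi> :: "nat \<Rightarrow> real \<Rightarrow> real"
  assumes antimono: "\<And>N R R'. R \<le> R' \<Longrightarrow> \<phi> N R' \<le> \<phi> N R"
    and each: "\<And>N. \<exists>R. \<phi> N R \<le> e"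
    and eventual: "\<And>N. N0 \<le> N \<Longrightarrow> \<phi> N R0 \<le> e"
  shows "\<exists>R. \<forall>N. \<phi> N R \<le> e"
proof -
  obtain Rs where Rs: "\<And>N. \<phi> N (Rs N) \<le> e" using each by metis
  define R where "R = Max (insert R0 (Rs ` {..<N0}))"
  have "\<phi> N R \<le> e" for N
  proof (cases "N < N0")
    case True
    then have "Rs N \<le> R" unfolding R_def by (intro Max_ge) auto
    then show ?thesis using antimono[of "Rs N" R N] Rs[of N] by linarith
  next
    case False
    have "R0 \<le> R" unfolding R_def by (intro Max_ge) auto
    then show ?thesis using antimono[of R0 R N] eventual[of N] False by linarith
  qed
  then show ?thesis by blast
qed

section \<open>Integrals against Jordan pairs and their squares\<close>

text \<open>Integrals against \<open>P + s M\<close> and against \<open>(P + s M) \<otimes> (P + s M)\<close> for \<open>s = \<plusminus>1\<close>: with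
  \<open>s = -1\<close> a Jordan pair \<open>(P, M)\<close> gives its signed measure, with \<open>s = 1\<close> its variation.
  The coefficient of \<open>M \<otimes> M\<close> is \<open>s\<^sup>2 = 1\<close>.\<close>

definition comb_int :: "real \<Rightarrow> 'a measure \<Rightarrow> 'a measure \<Rightarrow> ('a \<Rightarrow> real) \<Rightarrow> real" where
  "comb_int s P M f = integral\<^sup>L P f + s * integral\<^sup>L M f"

definition comb_int2 :: "real \<Rightarrow> 'a measure \<Rightarrow> 'a measure \<Rightarrow> ('a \<times> 'a \<Rightarrow> real) \<Rightarrow> real" where
  "comb_int2 s P M g = integral\<^sup>L (P \<Otimes>\<^sub>M P) g + s * integral\<^sup>L (P \<Otimes>\<^sub>M M) g
     + s * integral\<^sup>L (M \<Otimes>\<^sub>M P) g + integral\<^sup>L (M \<Otimes>\<^sub>M M) g"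

lemma sint_eq_comb_int: "sint \<mu> f = comb_int (-1) (fst \<mu>) (snd \<mu>) f"
  unfolding sint_def comb_int_def by simp

lemma var_int_eq_comb_int: "var_int \<mu> f = comb_int 1 (fst \<mu>) (snd \<mu>) f"
  unfolding var_int_def comb_int_def by simp

lemma sint2_eq_comb_int2: "sint2 \<mu> g = comb_int2 (-1) (fst \<mu>) (snd \<mu>) g"
  unfolding sint2_def comb_int2_def by simp

lemma comb_int_indicator:
  "finite_borel P \<Longrightarrow> finite_borel M \<Longrightarrow> comb_int s P M (indicator A) = measure P A + s * measure M A"
  by (simp add: comb_int_def finite_borel_space)

lemma comb_int_const:
  "finite_borel P \<Longrightarrow> finite_borel M \<Longrightarrow> comb_int s P M (\<lambda>x. c) = c * (measure P UNIV + s * measure M UNIV)"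
  by (simp add: comb_int_def finite_borel_space algebra_simps)

context
  fixes P M :: "'a::second_countable_topology measure"
  assumes P: "finite_borel P" and M: "finite_borel M"
begin

lemma comb_int2_add:
  "bounded_borel f \<Longrightarrow> bounded_borel g \<Longrightarrow>
    comb_int2 s P M (\<lambda>x. f x + g x) = comb_int2 s P M f + comb_int2 s P M g"
  unfolding comb_int2_def using P M by (simp add: finite_borel_integrable finite_borel_pair algebra_simps)

lemma comb_int2_diff:
  "bounded_borel f \<Longrightarrow> bounded_borel g \<Longrightarrow>
    comb_int2 s P M (\<lambda>x. f x - g x) = comb_int2 s P M f - comb_int2 s P M g"
  unfolding comb_int2_def using P M by (simp add: finite_borel_integrable finite_borel_pair algebra_simps)

lemma comb_int2_cmult: "comb_int2 s P M (\<lambda>x. c * f x) = c * comb_int2 s P M f"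
  unfolding comb_int2_def by (simp add: algebra_simps)

lemma comb_int2_tensor:
  assumes "s * s = 1" "bounded_borel a" "bounded_borel b"
  shows "comb_int2 s P M (\<lambda>p. a (fst p) * b (snd p)) = comb_int s P M a * comb_int s P M b"
  unfolding comb_int2_def comb_int_def using assms P M by (simp add: integral_tensor algebra_simps)

lemma comb_int2_indicator:
  "comb_int2 s P M (indicator B) = measure (P \<Otimes>\<^sub>M P) B + s * measure (P \<Otimes>\<^sub>M M) B
     + s * measure (M \<Otimes>\<^sub>M P) B + measure (M \<Otimes>\<^sub>M M) B"
  unfolding comb_int2_def using P M
  by (simp only: finite_borel_integral_indicator finite_borel_pair)

lemma comb_int2_abs_le:
  assumes s: "s * s = 1" and g: "bounded_borel g" and bound: "\<And>x. \<bar>f x\<bar> \<le> g x"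
  shows "\<bar>comb_int2 s P M f\<bar> \<le> comb_int2 1 P M g"
proof -
  have "(s - 1) * (s + 1) = 0" using s by (simp add: algebra_simps)
  then have "\<bar>s\<bar> = 1" by auto
  moreover have "\<bar>integral\<^sup>L (X \<Otimes>\<^sub>M Y) f\<bar> \<le> integral\<^sup>L (X \<Otimes>\<^sub>M Y) g"
    if "X \<in> {P, M}" "Y \<in> {P, M}" for X Y
  proof (rule integral_abs_le_integral[OF finite_borel_integrable[OF finite_borel_pair g] bound])
    show "finite_borel X" "finite_borel Y" using that P M by auto
  qed
  ultimately show ?thesis unfolding comb_int2_def abs_mult[symmetric]
    by (intro order.trans[OF abs_triangle_ineq] add_mono order_refl) (auto simp: abs_mult)
qed

end

lemma tendsto_integral_bounded:
  assumes A: "finite_borel A" and F: "\<And>n. F n \<in> borel_measurable borel" "F0 \<in> borel_measurable borel"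
    and bound: "\<And>n x. \<bar>F n x\<bar> \<le> B" and lim: "\<And>x. (\<lambda>n. F n x) \<longlonglongrightarrow> F0 x"
  shows "(\<lambda>n. integral\<^sup>L A (F n)) \<longlonglongrightarrow> integral\<^sup>L A (F0 :: _ \<Rightarrow> real)"
proof (rule integral_dominated_convergence[where w="\<lambda>x. B"])
  show "integrable A (\<lambda>x. B)" using A bounded_borel_const by (rule finite_borel_integrable)
qed (use A F bound lim in \<open>auto intro: finite_borel_measurable\<close>)

lemma tendsto_comb_int_bounded:
  assumes "finite_borel P" "finite_borel M" "\<And>n. F n \<in> borel_measurable borel" "F0 \<in> borel_measurable borel"
    and "\<And>n x. \<bar>F n x\<bar> \<le> B" and "\<And>x. (\<lambda>n. F n x) \<longlonglongrightarrow> F0 x"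
  shows "(\<lambda>n. comb_int s P M (F n)) \<longlonglongrightarrow> comb_int s P M F0"
  unfolding comb_int_def using assms
  by (intro tendsto_add tendsto_mult tendsto_const tendsto_integral_bounded)

lemma tendsto_comb_int2_bounded:
  fixes P M :: "'a::second_countable_topology measure"
  assumes "finite_borel P" "finite_borel M" "\<And>n. F n \<in> borel_measurable borel" "F0 \<in> borel_measurable borel"
    and "\<And>n x. \<bar>F n x\<bar> \<le> B" and "\<And>x. (\<lambda>n. F n x) \<longlonglongrightarrow> F0 x"
  shows "(\<lambda>n. comb_int2 s P M (F n)) \<longlonglongrightarrow> comb_int2 s P M F0"
  unfolding comb_int2_def using assms
  by (intro tendsto_add tendsto_mult tendsto_const tendsto_integral_bounded finite_borel_pair)

section \<open>The diagonal and continuous approximations\<close>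

lemma closed_Id: "closed (Id :: ('a::t2_space \<times> 'a) set)"
  unfolding Id_fstsnd_eq by (intro closed_Collect_eq continuous_on_fst continuous_on_snd continuous_on_id)

lemma Id_borel: "(Id :: ('a::{second_countable_topology, t2_space} \<times> 'a) set) \<in> sets borel"
  using closed_Id by (rule borel_closed)

lemma emeasure_pair_Id_nonatomic_right:
  fixes A B :: "'a::{second_countable_topology, t2_space} measure"
  assumes A: "finite_borel A" and B: "finite_borel B" and atomless: "\<And>x. emeasure B {x} = 0"
  shows "emeasure (A \<Otimes>\<^sub>M B) Id = 0"
proof -
  interpret B: finite_measure B using B by (simp add: finite_borel_def)
  have "Id \<in> sets (A \<Otimes>\<^sub>M B)"
    using finite_borel_pair[OF A B] Id_borel by (simp add: finite_borel_def)
  then have "emeasure (A \<Otimes>\<^sub>M B) Id = (\<integral>\<^sup>+x. emeasure B (Pair x -` Id) \<partial>A)"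
    by (rule B.emeasure_pair_measure_alt)
  also have "\<dots> = 0"
    using atomless by (simp add: vimage_def)
  finally show ?thesis .
qed

lemma emeasure_pair_Id_nonatomic_left:
  fixes A B :: "'a::{second_countable_topology, t2_space} measure"
  assumes A: "finite_borel A" and B: "finite_borel B" and atomless: "\<And>x. emeasure A {x} = 0"
  shows "emeasure (A \<Otimes>\<^sub>M B) Id = 0"
proof -
  interpret A: finite_measure A using A by (simp add: finite_borel_def)
  interpret B: finite_measure B using B by (simp add: finite_borel_def)
  interpret pair_sigma_finite A B ..
  have "Id \<in> sets (A \<Otimes>\<^sub>M B)"
    using finite_borel_pair[OF A B] Id_borel by (simp add: finite_borel_def)
  then have "emeasure (A \<Otimes>\<^sub>M B) Id = (\<integral>\<^sup>+y. emeasure A ((\<lambda>x. (x, y)) -` Id) \<partial>B)"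
    by (rule emeasure_pair_measure_alt2)
  also have "\<dots> = 0"
    using atomless by (simp add: vimage_def)
  finally show ?thesis .
qed

text \<open>The case split is needed because \<open>infdist p {} = 0\<close>.\<close>

definition indicator_approx :: "'a::metric_space set \<Rightarrow> nat \<Rightarrow> 'a \<Rightarrow> real" where
  "indicator_approx S n p = (if S = {} then 0 else max 0 (1 - real (Suc n) * infdist p S))"

lemma indicator_approx_range: "0 \<le> indicator_approx S n p" "indicator_approx S n p \<le> 1"
  unfolding indicator_approx_def using infdist_nonneg[of p S] by auto

lemma bcont_indicator_approx: "bcont (indicator_approx S n)"
proof -
  have "continuous_on UNIV (\<lambda>p. max 0 (1 - real (Suc n) * infdist p S))"
    by (intro continuous_intros)
  then have "continuous_on UNIV (indicator_approx S n)"
    unfolding indicator_approx_def by (cases "S = {}") auto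
  moreover have "bounded (range (indicator_approx S n))"
    unfolding bounded_real using indicator_approx_range[of S n] by (intro exI[of _ 1]) auto
  ultimately show ?thesis unfolding bcont_def by blast
qed

lemma tendsto_indicator_approx:
  assumes S: "closed S"
  shows "(\<lambda>n. indicator_approx S n p) \<longlonglongrightarrow> indicator S p"
proof (cases "S = {} \<or> p \<in> S")
  case True
  then have "indicator_approx S n p = indicator S p" for n
    by (auto simp: indicator_approx_def)
  then show ?thesis by simp
next
  case False
  then have d: "0 < infdist p S" using infdist_pos_not_in_closed[OF S] by blast
  obtain N :: nat where N: "1 / infdist p S < real N" using reals_Archimedean2 by blast
  have "indicator_approx S n p = 0" if "N \<le> n" for n
  proof -
    have "1 / infdist p S < real (Suc n)" using N that by linarith
    then have "1 < real (Suc n) * infdist p S" using d by (simp add: field_simps)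
    then show ?thesis using False by (simp add: indicator_approx_def)
  qed
  then have "(\<lambda>n. indicator_approx S n p) \<longlonglongrightarrow> 0"
    by (intro tendsto_eventually) (auto simp: eventually_sequentially)
  then show ?thesis using False by simp
qed

lemma tendsto_comb_int_indicator_approx:
  assumes P: "finite_borel P" and M: "finite_borel M" and S: "closed S"
  shows "(\<lambda>n. comb_int s P M (indicator_approx S n)) \<longlonglongrightarrow> comb_int s P M (indicator S)"
proof (rule tendsto_comb_int_bounded[OF P M, where B=1])
  show "indicator_approx S n \<in> borel_measurable borel" for n
    by (intro bounded_borel_measurable bcont_bounded_borel bcont_indicator_approx)
  show "(indicator S :: _ \<Rightarrow> real) \<in> borel_measurable borel"
    using S by (simp add: borel_closed)
  show "\<bar>indicator_approx S n x\<bar> \<le> 1" for n x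
    using indicator_approx_range[of S n x] by simp
qed (rule tendsto_indicator_approx[OF S])

definition ramp :: "real \<Rightarrow> 'a::real_normed_vector \<Rightarrow> real" where
  "ramp d v = min 1 (norm v / d)"

lemma ramp_nonneg: "0 \<le> d \<Longrightarrow> 0 \<le> ramp d v"
  unfolding ramp_def by auto

lemma ramp_le_1: "ramp d v \<le> 1"
  unfolding ramp_def by auto

lemma ramp_0 [simp]: "ramp d 0 = 0"
  by (simp add: ramp_def)

lemma continuous_on_ramp: "0 < d \<Longrightarrow> continuous_on UNIV (ramp d)"
  unfolding ramp_def by (intro continuous_intros) auto

lemma ramp_eventually_1:
  assumes "v \<noteq> 0"
  shows "eventually (\<lambda>n. ramp (1 / real (Suc n)) v = 1) sequentially"
proof -
  obtain N :: nat where N: "1 / norm v < real N" using reals_Archimedean2 by blast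
  have "ramp (1 / real (Suc n)) v = 1" if "N \<le> n" for n
  proof -
    have "1 / norm v < real (Suc n)" using N that by linarith
    then have "1 < norm v * real (Suc n)" using assms by (simp add: field_simps)
    then show ?thesis by (simp add: ramp_def)
  qed
  then show ?thesis unfolding eventually_sequentially by blast
qed

lemma continuous_on_diff_pair: "continuous_on UNIV (\<lambda>p::'a::real_normed_vector \<times> 'a. fst p - snd p)"
  by (intro continuous_on_diff continuous_on_fst continuous_on_snd continuous_on_id)

lemma continuous_on_ramp_diff:
  "0 < d \<Longrightarrow> continuous_on UNIV (\<lambda>p::'a::real_normed_vector \<times> 'a. ramp d (fst p - snd p))"
  by (rule continuous_on_compose2[OF continuous_on_ramp continuous_on_diff_pair]) auto

lemma integral_off_Id:
  fixes X Y :: "'a::{second_countable_topology, t2_space} measure"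
  assumes X: "finite_borel X" and Y: "finite_borel Y" and null: "emeasure (X \<Otimes>\<^sub>M Y) Id = 0"
    and g: "bounded_borel g"
  shows "(\<integral>p. g p * indicator (-Id) p \<partial>(X \<Otimes>\<^sub>M Y)) = integral\<^sup>L (X \<Otimes>\<^sub>M Y) g"
proof (rule integral_cong_AE)
  have XY: "finite_borel (X \<Otimes>\<^sub>M Y)" using X Y by (rule finite_borel_pair)
  show "(\<lambda>p. g p * indicator (-Id) p) \<in> borel_measurable (X \<Otimes>\<^sub>M Y)"
    using bounded_borel_mult[OF g bounded_borel_indicator[OF borel_comp[OF Id_borel]]]
    by (intro finite_borel_measurable[OF XY] bounded_borel_measurable)
  show "g \<in> borel_measurable (X \<Otimes>\<^sub>M Y)"
    using g by (intro finite_borel_measurable[OF XY] bounded_borel_measurable)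
  have "Id \<in> null_sets (X \<Otimes>\<^sub>M Y)"
    using null XY Id_borel by (intro null_setsI) (auto simp: finite_borel_def)
  then show "AE p in X \<Otimes>\<^sub>M Y. g p * indicator (-Id) p = g p"
    by (rule AE_I') (auto simp: indicator_def)
qed

definition cutoff :: "real \<Rightarrow> 'a::real_normed_vector \<Rightarrow> real" where
  "cutoff R x = max 0 (min 1 (R + 1 - norm x))"

lemma continuous_on_cutoff: "continuous_on UNIV (cutoff R)"
  unfolding cutoff_def by (intro continuous_intros)

lemma cutoff_range: "0 \<le> cutoff R x" "cutoff R x \<le> 1"
  unfolding cutoff_def by auto

lemma cutoff_eq_1: "norm x \<le> R \<Longrightarrow> cutoff R x = 1"
  unfolding cutoff_def by auto

lemma cutoff_eq_0: "x \<notin> cball 0 (R + 1) \<Longrightarrow> cutoff R x = 0"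
  unfolding cutoff_def by auto

lemma bcont_mult_compact_support:
  fixes w f :: "'a::metric_space \<Rightarrow> real"
  assumes w: "continuous_on UNIV w" "\<And>x. \<bar>w x\<bar> \<le> 1" "\<And>x. x \<notin> K \<Longrightarrow> w x = 0"
    and K: "compact K" and f: "continuous_on UNIV f"
  shows "bcont (\<lambda>x. w x * f x)"
proof -
  obtain B where B: "\<And>x. x \<in> K \<Longrightarrow> \<bar>f x\<bar> \<le> B"
    using compact_imp_bounded[OF compact_continuous_image[OF continuous_on_subset[OF f] K]]
    unfolding bounded_real by blast
  have "\<bar>w x * f x\<bar> \<le> \<bar>B\<bar>" for x
  proof (cases "x \<in> K")
    case True
    have "\<bar>w x\<bar> * \<bar>f x\<bar> \<le> 1 * \<bar>B\<bar>"
      using w(2)[of x] B[OF True] by (intro mult_mono) auto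
    then show ?thesis by (simp add: abs_mult)
  qed (simp add: w(3))
  then have "bounded (range (\<lambda>x. w x * f x))" unfolding bounded_real by blast
  then show ?thesis unfolding bcont_def using w(1) f by (auto intro: continuous_on_mult)
qed

lemma bcont_cutoff_mult:
  fixes f :: "'a::{heine_borel, real_normed_vector} \<Rightarrow> real"
  assumes "continuous_on UNIV f"
  shows "bcont (\<lambda>x. cutoff R x * f x)"
proof (rule bcont_mult_compact_support[where K="cball 0 (R + 1)"])
  show "\<bar>cutoff R x\<bar> \<le> 1" for x
    using cutoff_range[of R x] by simp
qed (use assms cutoff_eq_0 continuous_on_cutoff in auto)

lemma bcont_cutoff2_mult:
  fixes f :: "'a::{heine_borel, real_normed_vector} \<times> 'a \<Rightarrow> real"
  assumes "continuous_on UNIV f"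
  shows "bcont (\<lambda>z. cutoff R (fst z) * cutoff R (snd z) * f z)"
proof (rule bcont_mult_compact_support[where K="cball 0 (R + 1) \<times> cball 0 (R + 1)"])
  show "continuous_on UNIV (\<lambda>z::'a \<times> 'a. cutoff R (fst z) * cutoff R (snd z))"
    by (intro continuous_on_mult continuous_on_compose2[OF continuous_on_cutoff])
      (auto intro: continuous_on_fst continuous_on_snd continuous_on_id)
  show "\<bar>cutoff R (fst z) * cutoff R (snd z)\<bar> \<le> 1" for z :: "'a \<times> 'a"
    using cutoff_range[of R "fst z"] cutoff_range[of R "snd z"] by (simp add: mult_le_one)
  show "cutoff R (fst z) * cutoff R (snd z) = 0" if "z \<notin> cball 0 (R + 1) \<times> cball 0 (R + 1)" for z :: "'a \<times> 'a"
    using that by (cases z) (auto simp: cutoff_eq_0)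
qed (auto intro: compact_Times assms)

lemma integral_one_minus_cutoff_le:
  fixes X :: "'a::euclidean_space measure"
  assumes X: "finite_borel X"
  shows "(\<integral>x. 1 - cutoff R x \<partial>X) \<le> measure X (- cball 0 R)"
proof -
  have "(\<integral>x. 1 - cutoff R x \<partial>X) \<le> (\<integral>x. indicator (- cball 0 R) x \<partial>X)"
  proof (rule integral_mono)
    show "integrable X (\<lambda>x. 1 - cutoff R x)"
      using X bcont_bounded_borel bcont_cutoff_mult[of "\<lambda>_. 1" R]
      by (intro finite_borel_integrable bounded_borel_diff bounded_borel_const) auto
    show "integrable X (indicator (- cball 0 R) :: 'a \<Rightarrow> real)"
      using X by (intro finite_borel_integrable bounded_borel_indicator) auto
    show "1 - cutoff R x \<le> indicator (- cball 0 R) x" for x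
      using cutoff_eq_1[of x R] cutoff_range[of R x] by (auto simp: indicator_def)
  qed
  then show ?thesis by (simp add: finite_borel_space[OF X])
qed

lemma integral_one_minus_cutoff_ge:
  fixes X :: "'a::euclidean_space measure"
  assumes X: "finite_borel X"
  shows "measure X (- cball 0 (R + 1)) \<le> (\<integral>x. 1 - cutoff R x \<partial>X)"
proof -
  have "(\<integral>x. indicator (- cball 0 (R + 1)) x \<partial>X) \<le> (\<integral>x. 1 - cutoff R x \<partial>X)"
  proof (rule integral_mono)
    show "integrable X (\<lambda>x. 1 - cutoff R x)"
      using X bcont_bounded_borel bcont_cutoff_mult[of "\<lambda>_. 1" R]
      by (intro finite_borel_integrable bounded_borel_diff bounded_borel_const) auto
    show "integrable X (indicator (- cball 0 (R + 1)) :: 'a \<Rightarrow> real)"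
      using X by (intro finite_borel_integrable bounded_borel_indicator) auto
    show "indicator (- cball 0 (R + 1)) x \<le> 1 - cutoff R x" for x
      using cutoff_eq_0[of x R] cutoff_range[of R x] by (auto simp: indicator_def)
  qed
  then show ?thesis by (simp add: finite_borel_space[OF X])
qed

section \<open>Narrow convergence of products\<close>

text \<open>On finite sums of tensor products \<open>a(x) b(y)\<close>, narrow convergence of product measures reduces
  to that of the factors.\<close>

inductive separable :: "('a::topological_space \<times> 'b::topological_space \<Rightarrow> real) \<Rightarrow> bool" where
  tensor: "continuous_on UNIV a \<Longrightarrow> continuous_on UNIV b \<Longrightarrow> separable (\<lambda>z. a (fst z) * b (snd z))"
| add: "separable p \<Longrightarrow> separable q \<Longrightarrow> separable (\<lambda>z. p z + q z)"

lemma separable_continuous: "separable p \<Longrightarrow> continuous_on UNIV p"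
proof (induction rule: separable.induct)
  case (tensor a b)
  then show ?case
    by (intro continuous_on_mult continuous_on_compose2[of UNIV a UNIV fst]
        continuous_on_compose2[of UNIV b UNIV snd]) (auto intro: continuous_on_fst continuous_on_snd continuous_on_id)
qed (rule continuous_on_add)

lemma separable_mult:
  assumes "separable p" "separable q"
  shows "separable (\<lambda>z. p z * q z)"
  using assms
proof (induction arbitrary: q rule: separable.induct)
  case (tensor a b)
  from tensor.prems show ?case
  proof induction
    case (tensor c d)
    have "separable (\<lambda>z. (\<lambda>x. a x * c x) (fst z) * (\<lambda>y. b y * d y) (snd z))"
      using tensor.hyps \<open>continuous_on UNIV a\<close> \<open>continuous_on UNIV b\<close>
      by (intro separable.tensor continuous_on_mult)
    then show ?case by (simp add: mult_ac)
  next
    case (add q1 q2)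
    then show ?case using separable.add[OF add.IH] by (simp add: distrib_left)
  qed
next
  case (add p1 p2)
  then show ?case using separable.add[OF add.IH] by (simp add: distrib_right)
qed

lemma separable_const: "separable (\<lambda>z. c)"
proof -
  have "separable (\<lambda>z. (\<lambda>x. c) (fst z) * (\<lambda>y. 1) (snd z))"
    by (intro separable.tensor continuous_on_const)
  then show ?thesis by simp
qed

lemma separable_bounded_linear:
  fixes f :: "'a::real_normed_vector \<times> 'b::real_normed_vector \<Rightarrow> real"
  assumes f: "bounded_linear f"
  shows "separable f"
proof -
  have "continuous_on UNIV (\<lambda>x. f (x, 0))"
    by (intro continuous_on_compose2[OF linear_continuous_on[OF f]] continuous_intros) auto
  moreover have "continuous_on UNIV (\<lambda>y. f (0, y))"
    by (intro continuous_on_compose2[OF linear_continuous_on[OF f]] continuous_intros) auto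
  ultimately have "separable (\<lambda>z. (\<lambda>x. f (x, 0)) (fst z) * 1 + 1 * (\<lambda>y. f (0, y)) (snd z))"
    by (intro separable.add separable.tensor continuous_on_const)
  moreover have "(\<lambda>z. f (fst z, 0) * 1 + 1 * f (0, snd z)) = f"
  proof
    fix z
    show "f (fst z, 0) * 1 + 1 * f (0, snd z) = f z"
      using linear_add[OF bounded_linear.linear[OF f], of "(fst z, 0)" "(0, snd z)"] by simp
  qed
  ultimately show ?thesis by simp
qed

lemma separable_polynomial:
  fixes p :: "'a::real_normed_vector \<times> 'b::real_normed_vector \<Rightarrow> real"
  shows "real_polynomial_function p \<Longrightarrow> separable p"
proof (induction rule: real_polynomial_function.induct)
  case (linear f)
  then show ?case by (rule separable_bounded_linear)
next
  case (const c)
  then show ?case by (rule separable_const)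
next
  case (add f g)
  from add.IH show ?case by (rule separable.add)
next
  case (mult f g)
  from mult.IH show ?case by (rule separable_mult)
qed

lemma tendsto_comb_int2_separable:
  fixes P M :: "nat \<Rightarrow> 'a::euclidean_space measure"
  assumes P: "\<And>N. finite_borel (P N)" and M: "\<And>N. finite_borel (M N)"
    and P0: "finite_borel P0" and M0: "finite_borel M0" and s: "s * s = 1"
    and conv: "\<And>f. bcont f \<Longrightarrow> (\<lambda>N. comb_int s (P N) (M N) f) \<longlonglongrightarrow> comb_int s P0 M0 f"
    and p: "separable p"
  shows "(\<lambda>N. comb_int2 s (P N) (M N) (\<lambda>z. cutoff R (fst z) * cutoff R (snd z) * p z))
           \<longlonglongrightarrow> comb_int2 s P0 M0 (\<lambda>z. cutoff R (fst z) * cutoff R (snd z) * p z)"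
  using p
proof induction
  case (tensor a b)
  define a' where "a' x = cutoff R x * a x" for x
  define b' where "b' y = cutoff R y * b y" for y
  have ab': "bcont a'" "bcont b'"
    unfolding a'_def b'_def using tensor by (auto intro: bcont_cutoff_mult)
  have eq: "(\<lambda>z. cutoff R (fst z) * cutoff R (snd z) * (a (fst z) * b (snd z))) = (\<lambda>z. a' (fst z) * b' (snd z))"
    by (simp add: a'_def b'_def fun_eq_iff mult_ac)
  have split: "comb_int2 s X Y (\<lambda>z. a' (fst z) * b' (snd z)) = comb_int s X Y a' * comb_int s X Y b'"
    if "finite_borel X" "finite_borel Y" for X Y
    using comb_int2_tensor[OF that s bcont_bounded_borel[OF ab'(1)] bcont_bounded_borel[OF ab'(2)]] .
  show ?case
    unfolding eq split[OF P M] split[OF P0 M0] by (intro tendsto_mult conv ab')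
next
  case (add p q)
  let ?c = "\<lambda>z. cutoff R (fst z) * cutoff R (snd z)"
  have cut: "bounded_borel (\<lambda>z. ?c z * r z)" if "separable r" for r :: "'a \<times> 'a \<Rightarrow> real"
    using bcont_cutoff2_mult[OF separable_continuous[OF that]] by (rule bcont_bounded_borel)
  have split: "comb_int2 s X Y (\<lambda>z. ?c z * (p z + q z)) = comb_int2 s X Y (\<lambda>z. ?c z * p z) + comb_int2 s X Y (\<lambda>z. ?c z * q z)"
    if "finite_borel X" "finite_borel Y" for X Y
    using comb_int2_add[OF that cut[OF add.hyps(1)] cut[OF add.hyps(2)]] by (simp add: distrib_left)
  show ?case
    unfolding split[OF P M] split[OF P0 M0] using add.IH by (rule tendsto_add)
qed

lemma comb_int2_close:
  fixes P M :: "'a::second_countable_topology measure"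
  assumes P: "finite_borel P" and M: "finite_borel M" and s: "s * s = 1"
    and g: "bounded_borel g" and h: "bounded_borel h" and K: "K \<in> sets borel"
    and bound: "\<And>z. \<bar>g z - h z\<bar> \<le> e + c * (indicator (-K) (fst z) + indicator (-K) (snd z))"
  shows "\<bar>comb_int2 s P M g - comb_int2 s P M h\<bar> \<le> e * (measure P UNIV + measure M UNIV)^2
    + 2 * c * (measure P (-K) + measure M (-K)) * (measure P UNIV + measure M UNIV)"
proof -
  define one :: "'a \<Rightarrow> real" where "one x = 1" for x
  define out :: "'a \<Rightarrow> real" where "out = indicator (-K)"
  have one: "bounded_borel one" unfolding one_def by (rule bounded_borel_const)
  have out: "bounded_borel out" unfolding out_def using K by (intro bounded_borel_indicator) auto
  have tensor: "bounded_borel (\<lambda>z. a (fst z) * b (snd z))"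
    if "bounded_borel a" "bounded_borel b" for a b :: "'a \<Rightarrow> real"
    using that by (intro bounded_borel_mult bounded_borel_fst bounded_borel_snd)
  define k where "k z = e * (one (fst z) * one (snd z)) + c * (out (fst z) * one (snd z))
    + c * (one (fst z) * out (snd z))" for z
  have "\<bar>comb_int2 s P M g - comb_int2 s P M h\<bar> = \<bar>comb_int2 s P M (\<lambda>z. g z - h z)\<bar>"
    using comb_int2_diff[OF P M g h] by simp
  also have "\<dots> \<le> comb_int2 1 P M k"
  proof (rule comb_int2_abs_le[OF P M s])
    show "bounded_borel k"
      unfolding k_def by (intro bounded_borel_add bounded_borel_mult bounded_borel_const tensor one out)
    show "\<bar>g z - h z\<bar> \<le> k z" for z
      using bound[of z] by (simp add: k_def one_def out_def algebra_simps)
  qed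
  also have "comb_int2 1 P M k = e * (comb_int 1 P M one * comb_int 1 P M one)
      + c * (comb_int 1 P M out * comb_int 1 P M one) + c * (comb_int 1 P M one * comb_int 1 P M out)"
    unfolding k_def
    by (simp only: comb_int2_add[OF P M] comb_int2_cmult[OF P M] comb_int2_tensor[OF P M _ one one]
        comb_int2_tensor[OF P M _ one out] comb_int2_tensor[OF P M _ out one]
        bounded_borel_add bounded_borel_mult bounded_borel_const tensor one out mult_1)
  also have "\<dots> = e * (measure P UNIV + measure M UNIV)^2
      + 2 * c * (measure P (-K) + measure M (-K)) * (measure P UNIV + measure M UNIV)"
    unfolding one_def out_def
    by (simp add: comb_int_const[OF P M] comb_int_indicator[OF P M] power2_eq_square algebra_simps)
  finally show ?thesis .
qed

lemma separable_approximation: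
  fixes g :: "'a::euclidean_space \<times> 'a \<Rightarrow> real"
  assumes g: "continuous_on UNIV g" and G: "\<And>z. \<bar>g z\<bar> \<le> G" and e: "0 < e"
  obtains p where "separable p"
    "\<And>z. \<bar>g z - cutoff R (fst z) * cutoff R (snd z) * p z\<bar>
       \<le> e + (2 * G + e) * (indicator (- cball 0 R) (fst z) + indicator (- cball 0 R) (snd z))"
proof -
  let ?K = "cball (0::'a) (R + 1) \<times> cball (0::'a) (R + 1)"
  have K: "compact ?K" by (intro compact_Times compact_cball)
  have gK: "continuous_on ?K g" using g by (rule continuous_on_subset) simp
  obtain p where p: "real_polynomial_function p" "\<And>z. z \<in> ?K \<Longrightarrow> \<bar>g z - p z\<bar> < e"
    using Stone_Weierstrass_real_polynomial_function[OF K gK e] by blast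
  define c where "c z = cutoff R (fst z) * cutoff R (snd z)" for z :: "'a \<times> 'a"
  have c: "0 \<le> c z" "c z \<le> 1" for z
    using cutoff_range[of R "fst z"] cutoff_range[of R "snd z"] by (auto simp: c_def mult_le_one)
  have G0: "0 \<le> G" using G[of 0] by linarith
  have cp: "\<bar>c z * p z\<bar> \<le> G + e" for z
  proof (cases "z \<in> ?K")
    case True
    then have "\<bar>p z\<bar> \<le> G + e" using p(2)[of z] G[of z] by linarith
    then have "\<bar>c z\<bar> * \<bar>p z\<bar> \<le> 1 * (G + e)" using c[of z] by (intro mult_mono) auto
    then show ?thesis by (simp add: abs_mult)
  next
    case False
    then have "c z = 0" by (cases z) (auto simp: c_def cutoff_eq_0)
    then show ?thesis using G0 e by simp
  qed
  have "\<bar>g z - c z * p z\<bar>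
      \<le> e + (2 * G + e) * (indicator (- cball 0 R) (fst z) + indicator (- cball 0 R) (snd z))" for z
  proof (cases "fst z \<in> cball 0 R \<and> snd z \<in> cball 0 R")
    case True
    then have "z \<in> ?K" "c z = 1" by (cases z; auto simp: c_def cutoff_eq_1)+
    then show ?thesis using p(2)[of z] True by simp
  next
    case False
    then have "2 * G + e \<le> (2 * G + e) * (indicator (- cball 0 R) (fst z) + indicator (- cball 0 R) (snd z))"
      using G0 e by (auto simp: indicator_def)
    then show ?thesis using G[of z] cp[of z] e by linarith
  qed
  then show ?thesis using that[OF separable_polynomial[OF p(1)]] by (simp add: c_def)
qed

lemma tendsto_by_approximation:
  fixes x :: "nat \<Rightarrow> real"
  assumes approx: "\<And>e. 0 < e \<Longrightarrow> e \<le> 1 \<Longrightarrow>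
    \<exists>y y0. y \<longlonglongrightarrow> y0 \<and> (\<forall>N. \<bar>x N - y N\<bar> \<le> C * e) \<and> \<bar>x0 - y0\<bar> \<le> C * e"
  shows "x \<longlonglongrightarrow> x0"
proof (rule LIMSEQ_I)
  fix r :: real
  assume r: "0 < r"
  define e where "e = min 1 (r / (3 * (\<bar>C\<bar> + 1)))"
  have e: "0 < e" "e \<le> 1" using r by (auto simp: e_def)
  have "C * e \<le> \<bar>C\<bar> * e" using e by (simp add: mult_right_mono)
  also have "\<dots> \<le> \<bar>C\<bar> * (r / (3 * (\<bar>C\<bar> + 1)))"
    unfolding e_def by (intro mult_left_mono) auto
  also have "\<dots> < r / 3"
    using r by (simp add: field_simps)
  finally have Ce: "C * e < r / 3" .
  obtain y y0 where y: "y \<longlonglongrightarrow> y0" "\<And>N. \<bar>x N - y N\<bar> \<le> C * e" "\<bar>x0 - y0\<bar> \<le> C * e"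
    using approx[OF e] by blast
  obtain N0 where N0: "\<And>N. N0 \<le> N \<Longrightarrow> \<bar>y N - y0\<bar> < r / 3"
    using LIMSEQ_D[OF y(1), of "r / 3"] r by auto
  have "\<bar>x N - x0\<bar> < r" if "N0 \<le> N" for N
    using y(2)[of N] y(3) Ce N0[OF that] by linarith
  then show "\<exists>N0. \<forall>N\<ge>N0. norm (x N - x0) < r" by auto
qed

lemma comb_int2_close_uniform:
  fixes X Y :: "'a::second_countable_topology measure"
  assumes X: "finite_borel X" and Y: "finite_borel Y" and s: "s * s = 1"
    and g: "bounded_borel g" and h: "bounded_borel h" and K: "K \<in> sets borel"
    and bound: "\<And>z. \<bar>g z - h z\<bar> \<le> e + (2 * G + e) * (indicator (-K) (fst z) + indicator (-K) (snd z))"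
    and e: "0 \<le> e" "e \<le> 1" and G: "0 \<le> G"
    and mass: "measure X UNIV + measure Y UNIV \<le> C" and tail: "measure X (-K) + measure Y (-K) \<le> e"
  shows "\<bar>comb_int2 s X Y g - comb_int2 s X Y h\<bar> \<le> (C^2 + 2 * (2 * G + 1) * C) * e"
proof -
  define T where "T = measure X UNIV + measure Y UNIV"
  define t where "t = measure X (-K) + measure Y (-K)"
  have T: "0 \<le> T" "T \<le> C" and t: "0 \<le> t" "t \<le> e"
    using mass tail by (auto simp: T_def t_def)
  have "\<bar>comb_int2 s X Y g - comb_int2 s X Y h\<bar> \<le> e * T^2 + 2 * (2 * G + e) * t * T"
    unfolding T_def t_def by (rule comb_int2_close[OF X Y s g h K bound])
  also have "\<dots> \<le> (C^2 + 2 * (2 * G + 1) * C) * e"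
  proof -
    have "e * T^2 \<le> e * C^2" using T e by (intro mult_left_mono power_mono) auto
    moreover have "(2 * G + e) * t \<le> (2 * G + 1) * e" using t e G by (intro mult_mono) auto
    then have "(2 * G + e) * t * T \<le> (2 * G + 1) * e * C" using T t e G by (intro mult_mono) auto
    ultimately show ?thesis by (simp add: algebra_simps)
  qed
  finally show ?thesis .
qed

lemma uniform_tail_with_limit:
  fixes P M :: "nat \<Rightarrow> 'a::real_normed_vector measure" and P0 M0 :: "'a measure"
  assumes P: "\<And>N. finite_borel (P N)" and M: "\<And>N. finite_borel (M N)"
    and P0: "finite_borel P0" and M0: "finite_borel M0"
    and tight: "\<And>e. 0 < e \<Longrightarrow> \<exists>R. \<forall>N. measure (P N) (- cball 0 R) + measure (M N) (- cball 0 R) \<le> e"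
    and e: "0 < e"
  obtains R where "\<And>N. measure (P N) (- cball 0 R) + measure (M N) (- cball 0 R) \<le> e"
    "measure P0 (- cball 0 R) + measure M0 (- cball 0 R) \<le> e"
proof -
  obtain R1 where R1: "\<forall>N. measure (P N) (- cball 0 R1) + measure (M N) (- cball 0 R1) \<le> e"
    using tight[OF e] by blast
  have e2: "0 < e / 2" using e by simp
  obtain R2 where R2: "measure P0 (- cball 0 R2) < e / 2" using finite_borel_tail[OF P0 e2] by blast
  obtain R3 where R3: "measure M0 (- cball 0 R3) < e / 2" using finite_borel_tail[OF M0 e2] by blast
  define R where "R = max R1 (max R2 R3)"
  have R: "R1 \<le> R" "R2 \<le> R" "R3 \<le> R" by (auto simp: R_def)
  show ?thesis
  proof (rule that)
    show "measure (P N) (- cball 0 R) + measure (M N) (- cball 0 R) \<le> e" for N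
      using finite_borel_tail_antimono[OF P R(1), of N] finite_borel_tail_antimono[OF M R(1), of N]
        R1[rule_format, of N] by linarith
    show "measure P0 (- cball 0 R) + measure M0 (- cball 0 R) \<le> e"
      using finite_borel_tail_antimono[OF P0 R(2)] finite_borel_tail_antimono[OF M0 R(3)] R2 R3 by linarith
  qed
qed

lemma comb_int2_tendsto:
  fixes P M :: "nat \<Rightarrow> 'a::euclidean_space measure"
  assumes P: "\<And>N. finite_borel (P N)" and M: "\<And>N. finite_borel (M N)"
    and P0: "finite_borel P0" and M0: "finite_borel M0" and s: "s * s = 1"
    and mass: "\<And>N. measure (P N) UNIV + measure (M N) UNIV \<le> C"
    and tight: "\<And>e. 0 < e \<Longrightarrow> \<exists>R. \<forall>N. measure (P N) (- cball 0 R) + measure (M N) (- cball 0 R) \<le> e"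
    and conv: "\<And>f. bcont f \<Longrightarrow> (\<lambda>N. comb_int s (P N) (M N) f) \<longlonglongrightarrow> comb_int s P0 M0 f"
    and g: "bcont g"
  shows "(\<lambda>N. comb_int2 s (P N) (M N) g) \<longlonglongrightarrow> comb_int2 s P0 M0 g"
proof -
  obtain G where G: "\<And>z. \<bar>g z\<bar> \<le> G" using g unfolding bcont_def bounded_real by blast
  have G0: "0 \<le> G" using G[of undefined] by linarith
  have gc: "continuous_on UNIV g" using g by (simp add: bcont_def)
  define C' where "C' = max C (measure P0 UNIV + measure M0 UNIV)"
  show ?thesis
  proof (rule tendsto_by_approximation[where C="C'^2 + 2 * (2 * G + 1) * C'"])
    fix e :: real
    assume e: "0 < e" "e \<le> 1"
    obtain R where R: "\<And>N. measure (P N) (- cball 0 R) + measure (M N) (- cball 0 R) \<le> e"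
      "measure P0 (- cball 0 R) + measure M0 (- cball 0 R) \<le> e"
      using uniform_tail_with_limit[OF P M P0 M0 tight e(1)] by blast
    obtain p where p: "separable p" and gp: "\<And>z. \<bar>g z - cutoff R (fst z) * cutoff R (snd z) * p z\<bar>
       \<le> e + (2 * G + e) * (indicator (- cball 0 R) (fst z) + indicator (- cball 0 R) (snd z))"
      using separable_approximation[where R=R, OF gc G e(1)] by blast
    define h where "h z = cutoff R (fst z) * cutoff R (snd z) * p z" for z
    have h: "bounded_borel h"
      unfolding h_def by (intro bcont_bounded_borel bcont_cutoff2_mult separable_continuous p)
    have close: "\<bar>comb_int2 s X Y g - comb_int2 s X Y h\<bar> \<le> (C'^2 + 2 * (2 * G + 1) * C') * e"
      if "finite_borel X" "finite_borel Y" "measure X UNIV + measure Y UNIV \<le> C'"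
        "measure X (- cball 0 R) + measure Y (- cball 0 R) \<le> e" for X Y
      using e gp by (intro comb_int2_close_uniform[OF that(1,2) s bcont_bounded_borel[OF g] h _ _ _ _ G0 that(3,4)])
        (auto simp: h_def)
    show "\<exists>y y0. y \<longlonglongrightarrow> y0 \<and> (\<forall>N. \<bar>comb_int2 s (P N) (M N) g - y N\<bar> \<le> (C'^2 + 2 * (2 * G + 1) * C') * e)
      \<and> \<bar>comb_int2 s P0 M0 g - y0\<bar> \<le> (C'^2 + 2 * (2 * G + 1) * C') * e"
    proof (intro exI conjI allI)
      show "(\<lambda>N. comb_int2 s (P N) (M N) h) \<longlonglongrightarrow> comb_int2 s P0 M0 h"
        unfolding h_def by (rule tendsto_comb_int2_separable[OF P M P0 M0 s conv p])
      show "\<bar>comb_int2 s (P N) (M N) g - comb_int2 s (P N) (M N) h\<bar> \<le> (C'^2 + 2 * (2 * G + 1) * C') * e" for N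
        using mass[of N] R(1)[of N] by (intro close P M) (auto simp: C'_def)
      show "\<bar>comb_int2 s P0 M0 g - comb_int2 s P0 M0 h\<bar> \<le> (C'^2 + 2 * (2 * G + 1) * C') * e"
        using R(2) by (intro close P0 M0) (auto simp: C'_def)
    qed
  qed
qed

section \<open>The limit of the quadratic measures\<close>

lemma signed_meas_finite_borel:
  assumes "signed_meas \<rho>"
  shows "finite_borel (fst \<rho>)" "finite_borel (snd \<rho>)"
  using assms unfolding signed_meas_def finite_borel_def by auto

locale quadratic_limit =
  fixes \<mu>s :: "nat \<Rightarrow> (real^2) measure \<times> (real^2) measure"
    and \<mu> :: "(real^2) measure \<times> (real^2) measure"
    and \<nu>d :: "(real^2) measure"
    and \<gamma> :: "nat \<Rightarrow> real" and z :: "nat \<Rightarrow> real^2"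
    and Q :: "real^2 \<Rightarrow> real"
    and m :: "((real^2) \<times> (real^2)) measure \<times> ((real^2) \<times> (real^2)) measure"
  assumes mus: "\<And>N. signed_meas (\<mu>s N)"
    and mu: "signed_meas \<mu>" and mu_na: "s_nonatomic \<mu>"
    and conv: "\<And>f. bcont f \<Longrightarrow> (\<lambda>N. sint (\<mu>s N) f) \<longlonglongrightarrow> sint \<mu> f"
    and nud: "finite_measure \<nu>d" "sets \<nu>d = sets borel" "\<And>x. emeasure \<nu>d {x} = 0"
    and gamma: "\<And>j. \<gamma> j \<ge> 0" "summable \<gamma>" and z_inj: "inj z"
    and vconv: "\<And>f. bcont f \<Longrightarrow>
        (\<lambda>N. var_int (\<mu>s N) f) \<longlonglongrightarrow> (\<integral>x. f x \<partial>\<nu>d) + (\<Sum>j. \<gamma> j * f (z j))"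
    and Qcont: "continuous_on (-{0}) Q" and Qbdd: "bounded (Q ` (-{0}))"
    and Q0: "\<bar>Q 0\<bar> \<le> Qnorm Q"
    and m: "signed_meas m"
    and mconv: "\<And>f. bcont f \<Longrightarrow>
        (\<lambda>N. sint2 (\<mu>s N) (\<lambda>(x, y). Q (x - y) * f (x, y))) \<longlonglongrightarrow> sint m f"
begin

definition \<nu>a :: "(real^2) measure" where
  "\<nu>a = distr (density (count_space UNIV) (\<lambda>j. ennreal (\<gamma> j))) borel z"

lemma finite_borel_\<mu>s: "finite_borel (fst (\<mu>s N))" "finite_borel (snd (\<mu>s N))"
  using signed_meas_finite_borel[OF mus] by auto

lemma finite_borel_\<mu>: "finite_borel (fst \<mu>)" "finite_borel (snd \<mu>)"
  using signed_meas_finite_borel[OF mu] by auto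

lemma finite_borel_m: "finite_borel (fst m)" "finite_borel (snd m)"
  using signed_meas_finite_borel[OF m] by auto

lemma finite_borel_\<nu>d: "finite_borel \<nu>d"
  using nud by (simp add: finite_borel_def)

lemma measurable_z: "z \<in> measurable (density (count_space UNIV) (\<lambda>j. ennreal (\<gamma> j))) borel"
  using measurable_cong_sets[of "density (count_space UNIV) (\<lambda>j. ennreal (\<gamma> j))" "count_space UNIV" borel borel]
  by simp

lemma finite_borel_\<nu>a: "finite_borel \<nu>a"
proof -
  have "emeasure \<nu>a (space \<nu>a) = emeasure (density (count_space UNIV) (\<lambda>j. ennreal (\<gamma> j))) UNIV"
    unfolding \<nu>a_def by (subst emeasure_distr[OF measurable_z]) auto
  also have "\<dots> = (\<Sum>j. ennreal (\<gamma> j))"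
    by (subst emeasure_density) (auto simp: nn_integral_count_space_nat)
  also have "\<dots> = ennreal (suminf \<gamma>)"
    using gamma by (intro suminf_ennreal2) auto
  finally have "finite_measure \<nu>a" by (intro finite_measureI) simp
  then show ?thesis by (simp add: finite_borel_def \<nu>a_def)
qed

lemma emeasure_\<nu>a_atom: "emeasure \<nu>a {z j} = ennreal (\<gamma> j)"
proof -
  have "z -` {z j} = {j}" using z_inj by (auto simp: inj_def)
  then show ?thesis unfolding \<nu>a_def
    by (subst emeasure_distr[OF measurable_z]) (auto simp: emeasure_density)
qed

lemma measure_\<nu>a_atom: "measure \<nu>a {z j} = \<gamma> j"
  using emeasure_\<nu>a_atom gamma(1)[of j] by (simp add: measure_def)

lemma emeasure_\<nu>a_outside: "emeasure \<nu>a (- range z) = 0"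
proof -
  have "range z \<in> sets borel" by (rule sets.countable) auto
  then have "- range z \<in> sets borel" by (rule borel_comp)
  moreover have "z -` (- range z) = {}" by auto
  ultimately show ?thesis unfolding \<nu>a_def
    by (subst emeasure_distr[OF measurable_z]) auto
qed

lemma integral_\<nu>a:
  assumes f: "bounded_borel f"
  shows "integral\<^sup>L \<nu>a f = (\<Sum>j. \<gamma> j * f (z j))"
proof -
  obtain B where B: "\<And>x. \<bar>f x\<bar> \<le> B" using f unfolding bounded_borel_def by blast
  have summable: "summable (\<lambda>j. norm (\<gamma> j * f (z j)))"
  proof (rule summable_comparison_test[where g="\<lambda>j. \<gamma> j * B"])
    show "\<exists>N. \<forall>n\<ge>N. norm (norm (\<gamma> n * f (z n))) \<le> \<gamma> n * B"
      using gamma(1) B by (auto simp: abs_mult intro!: mult_left_mono)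
    show "summable (\<lambda>j. \<gamma> j * B)" using gamma(2) by (rule summable_mult2)
  qed
  have "integral\<^sup>L \<nu>a f = integral\<^sup>L (density (count_space UNIV) (\<lambda>j. ennreal (\<gamma> j))) (\<lambda>j. f (z j))"
    unfolding \<nu>a_def using f by (intro integral_distr measurable_z) (simp add: bounded_borel_def)
  also have "\<dots> = integral\<^sup>L (count_space UNIV) (\<lambda>j. \<gamma> j *\<^sub>R f (z j))"
    by (rule integral_density) (use gamma(1) in auto)
  also have "\<dots> = (\<Sum>j. \<gamma> j * f (z j))"
    by (subst integral_count_space_nat) (use summable in \<open>auto simp: integrable_count_space_nat_iff\<close>)
  finally show ?thesis .
qed

lemma signed_tendsto:
  assumes "bcont f"
  shows "(\<lambda>N. comb_int (-1) (fst (\<mu>s N)) (snd (\<mu>s N)) f) \<longlonglongrightarrow> comb_int (-1) (fst \<mu>) (snd \<mu>) f"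
  using conv[OF assms] unfolding sint_eq_comb_int .

lemma variation_tendsto:
  assumes f: "bcont f"
  shows "(\<lambda>N. comb_int 1 (fst (\<mu>s N)) (snd (\<mu>s N)) f) \<longlonglongrightarrow> comb_int 1 \<nu>d \<nu>a f"
proof -
  have "comb_int 1 \<nu>d \<nu>a f = (\<integral>x. f x \<partial>\<nu>d) + (\<Sum>j. \<gamma> j * f (z j))"
    unfolding comb_int_def integral_\<nu>a[OF bcont_bounded_borel[OF f]] by simp
  then show ?thesis using vconv[OF f] unfolding var_int_eq_comb_int by simp
qed

lemma Q_bound: "\<bar>Q v\<bar> \<le> Qnorm Q"
proof (cases "v = 0")
  case True
  then show ?thesis using Q0 by simp
next
  case False
  obtain B where "\<And>x. x \<in> Q ` (-{0}) \<Longrightarrow> \<bar>x\<bar> \<le> B" using Qbdd unfolding bounded_real by blast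
  then have "bdd_above ((\<lambda>x. \<bar>Q x\<bar>) ` (-{0}))" by (auto intro!: bdd_aboveI[of _ B])
  then show ?thesis unfolding Qnorm_def using False by (intro cSUP_upper) auto
qed

lemma Qnorm_nonneg: "0 \<le> Qnorm Q"
  using Q_bound[of 0] by linarith

lemma Q_measurable: "Q \<in> borel_measurable borel"
proof -
  have "(\<lambda>x. if x \<in> -{0} then Q x else Q 0) \<in> borel_measurable borel"
    by (rule borel_measurable_continuous_on_if) (auto intro: Qcont)
  moreover have "(\<lambda>x. if x \<in> -{0} then Q x else Q 0) = Q" by auto
  ultimately show ?thesis by simp
qed

lemma variation_mass_bounded: "\<exists>C. \<forall>N. measure (fst (\<mu>s N)) UNIV + measure (snd (\<mu>s N)) UNIV \<le> C"
proof -
  have "bcont (\<lambda>x::real^2. 1::real)" by (simp add: bcont_def)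
  then have "(\<lambda>N. comb_int 1 (fst (\<mu>s N)) (snd (\<mu>s N)) (\<lambda>x. 1)) \<longlonglongrightarrow> comb_int 1 \<nu>d \<nu>a (\<lambda>x. 1)"
    by (rule variation_tendsto)
  then have "Bseq (\<lambda>N. comb_int 1 (fst (\<mu>s N)) (snd (\<mu>s N)) (\<lambda>x. 1))"
    by (intro convergent_imp_Bseq convergentI)
  then obtain C where C: "\<And>N. norm (comb_int 1 (fst (\<mu>s N)) (snd (\<mu>s N)) (\<lambda>x. 1)) \<le> C"
    unfolding Bseq_def by (auto intro: less_imp_le)
  have "measure (fst (\<mu>s N)) UNIV + measure (snd (\<mu>s N)) UNIV \<le> C" for N
    using C[of N] comb_int_const[OF finite_borel_\<mu>s(1)[of N] finite_borel_\<mu>s(2)[of N], of 1 1] by simp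
  then show ?thesis by blast
qed

lemma variation_tail_eventually_small:
  assumes e: "0 < e"
  obtains R N0 where "\<And>N. N0 \<le> N \<Longrightarrow> measure (fst (\<mu>s N)) (- cball 0 R) + measure (snd (\<mu>s N)) (- cball 0 R) \<le> e"
proof -
  have e4: "0 < e / 4" using e by simp
  obtain R1 where R1: "measure \<nu>d (- cball 0 R1) < e / 4" using finite_borel_tail[OF finite_borel_\<nu>d e4] by blast
  obtain R2 where R2: "measure \<nu>a (- cball 0 R2) < e / 4" using finite_borel_tail[OF finite_borel_\<nu>a e4] by blast
  define R where "R = max R1 R2"
  have R: "R1 \<le> R" "R2 \<le> R" by (auto simp: R_def)
  define f where "f x = 1 - cutoff R x" for x :: "real^2"
  have f: "bcont f"
    using bcont_cutoff_mult[of "\<lambda>_. 1" R] unfolding f_def bcont_def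
    by (auto intro: continuous_on_diff bounded_minus_comp)
  have "comb_int 1 \<nu>d \<nu>a f \<le> measure \<nu>d (- cball 0 R) + measure \<nu>a (- cball 0 R)"
    unfolding comb_int_def f_def mult_1
    by (intro add_mono integral_one_minus_cutoff_le finite_borel_\<nu>d finite_borel_\<nu>a)
  also have "\<dots> < e"
    using finite_borel_tail_antimono[OF finite_borel_\<nu>d R(1)] finite_borel_tail_antimono[OF finite_borel_\<nu>a R(2)]
      R1 R2 e by linarith
  finally have "comb_int 1 \<nu>d \<nu>a f < e" .
  from order_tendstoD(2)[OF variation_tendsto[OF f] this]
  obtain N0 where N0: "\<And>N. N0 \<le> N \<Longrightarrow> comb_int 1 (fst (\<mu>s N)) (snd (\<mu>s N)) f < e"
    unfolding eventually_sequentially by blast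
  show ?thesis
  proof (rule that)
    fix N
    assume "N0 \<le> N"
    show "measure (fst (\<mu>s N)) (- cball 0 (R + 1)) + measure (snd (\<mu>s N)) (- cball 0 (R + 1)) \<le> e"
    proof -
      have "measure (fst (\<mu>s N)) (- cball 0 (R + 1)) + measure (snd (\<mu>s N)) (- cball 0 (R + 1))
          \<le> comb_int 1 (fst (\<mu>s N)) (snd (\<mu>s N)) f"
        unfolding comb_int_def f_def mult_1
        by (intro add_mono integral_one_minus_cutoff_ge finite_borel_\<mu>s)
      then show ?thesis using N0[OF \<open>N0 \<le> N\<close>] by linarith
    qed
  qed
qed

lemma variation_uniformly_tight:
  assumes e: "0 < e"
  shows "\<exists>R. \<forall>N. measure (fst (\<mu>s N)) (- cball 0 R) + measure (snd (\<mu>s N)) (- cball 0 R) \<le> e"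
proof -
  obtain R0 N0 where R0: "\<And>N. N0 \<le> N \<Longrightarrow> measure (fst (\<mu>s N)) (- cball 0 R0) + measure (snd (\<mu>s N)) (- cball 0 R0) \<le> e"
    using variation_tail_eventually_small[OF e] by blast
  show ?thesis
  proof (rule uniform_bound_from_eventual[where \<phi>="\<lambda>N R. measure (fst (\<mu>s N)) (- cball 0 R)
      + measure (snd (\<mu>s N)) (- cball 0 R)", OF _ _ R0])
    show "measure (fst (\<mu>s N)) (- cball 0 R') + measure (snd (\<mu>s N)) (- cball 0 R')
        \<le> measure (fst (\<mu>s N)) (- cball 0 R) + measure (snd (\<mu>s N)) (- cball 0 R)" if "R \<le> R'" for N R R'
      using finite_borel_tail_antimono[OF finite_borel_\<mu>s(1) that] finite_borel_tail_antimono[OF finite_borel_\<mu>s(2) that]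
      by (intro add_mono)
    show "\<exists>R. measure (fst (\<mu>s N)) (- cball 0 R) + measure (snd (\<mu>s N)) (- cball 0 R) \<le> e" for N
    proof -
      have e2: "0 < e / 2" using e by simp
      obtain R1 where R1: "measure (fst (\<mu>s N)) (- cball 0 R1) < e / 2"
        using finite_borel_tail[OF finite_borel_\<mu>s(1) e2] by blast
      obtain R2 where R2: "measure (snd (\<mu>s N)) (- cball 0 R2) < e / 2"
        using finite_borel_tail[OF finite_borel_\<mu>s(2) e2] by blast
      have "measure (fst (\<mu>s N)) (- cball 0 (max R1 R2)) + measure (snd (\<mu>s N)) (- cball 0 (max R1 R2)) \<le> e"
        using finite_borel_tail_antimono[OF finite_borel_\<mu>s(1)[of N] max.cobounded1[of R1 R2]]
          finite_borel_tail_antimono[OF finite_borel_\<mu>s(2)[of N] max.cobounded2[of R2 R1]] R1 R2 by linarith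
      then show ?thesis by blast
    qed
  qed
qed

lemma signed_square_tendsto:
  assumes "bcont g"
  shows "(\<lambda>N. comb_int2 (-1) (fst (\<mu>s N)) (snd (\<mu>s N)) g) \<longlonglongrightarrow> comb_int2 (-1) (fst \<mu>) (snd \<mu>) g"
proof -
  obtain C where "\<forall>N. measure (fst (\<mu>s N)) UNIV + measure (snd (\<mu>s N)) UNIV \<le> C"
    using variation_mass_bounded by blast
  then show ?thesis
    by (intro comb_int2_tendsto[OF finite_borel_\<mu>s finite_borel_\<mu> _ _ variation_uniformly_tight
          signed_tendsto assms]) auto
qed

lemma variation_square_tendsto:
  assumes "bcont g"
  shows "(\<lambda>N. comb_int2 1 (fst (\<mu>s N)) (snd (\<mu>s N)) g) \<longlonglongrightarrow> comb_int2 1 \<nu>d \<nu>a g"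
proof -
  obtain C where "\<forall>N. measure (fst (\<mu>s N)) UNIV + measure (snd (\<mu>s N)) UNIV \<le> C"
    using variation_mass_bounded by blast
  then show ?thesis
    by (intro comb_int2_tendsto[OF finite_borel_\<mu>s finite_borel_\<nu>d finite_borel_\<nu>a _ _ variation_uniformly_tight
          variation_tendsto assms]) auto
qed

definition Qtimes :: "((real^2) \<times> (real^2) \<Rightarrow> real) \<Rightarrow> (real^2) \<times> (real^2) \<Rightarrow> real" where
  "Qtimes f p = Q (fst p - snd p) * f p"

lemma Qtimes_eq: "(\<lambda>(x, y). Q (x - y) * f (x, y)) = Qtimes f"
  unfolding Qtimes_def by (rule ext) (simp add: case_prod_beta)

lemma bounded_borel_Qtimes:
  assumes f: "bounded_borel f"
  shows "bounded_borel (Qtimes f)"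
proof -
  obtain B where B: "\<And>p. \<bar>f p\<bar> \<le> B" using f unfolding bounded_borel_def by blast
  have "(\<lambda>p::(real^2) \<times> (real^2). fst p - snd p) \<in> borel_measurable borel"
    by (intro borel_measurable_continuous_onI continuous_intros)
  then have "(\<lambda>p. Q (fst p - snd p)) \<in> borel_measurable borel"
    using Q_measurable by (rule measurable_compose)
  then have "Qtimes f \<in> borel_measurable borel"
    using f unfolding Qtimes_def by (intro borel_measurable_times) (auto simp: bounded_borel_def)
  moreover have "\<bar>Qtimes f p\<bar> \<le> Qnorm Q * B" for p
    unfolding Qtimes_def using B[of p] Q_bound[of "fst p - snd p"] by (simp add: abs_mult mult_mono')
  ultimately show ?thesis by (rule bounded_borelI)
qed

text \<open>Continuity at the origin uses only the boundedness of \<open>Q\<close>.\<close>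

lemma continuous_on_Q_ramp:
  assumes d: "0 < d"
  shows "continuous_on UNIV (\<lambda>v. Q v * ramp d v)"
proof -
  have "isCont (\<lambda>v. Q v * ramp d v) v" for v
  proof (cases "v = 0")
    case False
    have "isCont Q v"
      using continuous_on_eq_continuous_at[of "-{0}" Q] Qcont False by auto
    moreover have "isCont (ramp d) v"
      using continuous_on_ramp[OF d] continuous_on_eq_continuous_at[of UNIV "ramp d"] by auto
    ultimately show ?thesis by (rule continuous_mult)
  next
    case True
    have "((\<lambda>x. Q x * ramp d x) \<longlongrightarrow> 0) (at v)"
    proof (rule Lim_null_comparison)
      show "\<forall>\<^sub>F x in at v. norm (Q x * ramp d x) \<le> Qnorm Q * (norm x / d)"
      proof (rule always_eventually, rule allI)
        fix x :: "real^2"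
        have "norm (Q x * ramp d x) = \<bar>Q x\<bar> * ramp d x"
          using ramp_nonneg[of d x] ramp_le_1[of d x] d by (simp add: abs_mult)
        also have "\<dots> \<le> Qnorm Q * (norm x / d)"
          using d Q_bound[of x] ramp_nonneg[of d x] ramp_le_1[of d x] d by (intro mult_mono) (auto simp: ramp_def)
        finally show "norm (Q x * ramp d x) \<le> Qnorm Q * (norm x / d)" .
      qed
      have "((\<lambda>x::real^2. Qnorm Q * (norm x / d)) \<longlongrightarrow> Qnorm Q * (norm v / d)) (at v)"
        using d by (intro tendsto_intros) auto
      then show "((\<lambda>x::real^2. Qnorm Q * (norm x / d)) \<longlongrightarrow> 0) (at v)"
        using True by simp
    qed
    then show ?thesis using True unfolding isCont_def by simp
  qed
  then show ?thesis by (simp add: continuous_on_eq_continuous_at)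
qed

lemma bcont_Q_ramp_mult:
  assumes f: "bcont f" and d: "0 < d"
  shows "bcont (\<lambda>p. Q (fst p - snd p) * ramp d (fst p - snd p) * f p)"
proof -
  obtain B where B: "\<And>p. \<bar>f p\<bar> \<le> B" using f unfolding bcont_def bounded_real by blast
  have "continuous_on UNIV (\<lambda>p. Q (fst p - snd p) * ramp d (fst p - snd p))"
    by (rule continuous_on_compose2[OF continuous_on_Q_ramp[OF d] continuous_on_diff_pair]) auto
  then have "continuous_on UNIV (\<lambda>p. Q (fst p - snd p) * ramp d (fst p - snd p) * f p)"
    using f unfolding bcont_def by (auto intro: continuous_on_mult)
  moreover have "\<bar>Q (fst p - snd p) * ramp d (fst p - snd p) * f p\<bar> \<le> Qnorm Q * B" for p
  proof -
    have r: "0 \<le> ramp d (fst p - snd p)" "ramp d (fst p - snd p) \<le> 1"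
      using d by (auto intro: ramp_nonneg ramp_le_1)
    have "\<bar>Q (fst p - snd p)\<bar> * ramp d (fst p - snd p) \<le> Qnorm Q * 1"
      using Q_bound Qnorm_nonneg r by (intro mult_mono) auto
    then show ?thesis
      using B[of p] Qnorm_nonneg r by (simp add: abs_mult mult_mono)
  qed
  then have "bounded (range (\<lambda>p. Q (fst p - snd p) * ramp d (fst p - snd p) * f p))"
    unfolding bounded_real by blast
  ultimately show ?thesis unfolding bcont_def by blast
qed

lemma bcont_ramp_compl_mult:
  assumes f: "bcont f" and d: "0 < d"
  shows "bcont (\<lambda>p. (1 - ramp d (fst p - snd p)) * \<bar>f p\<bar>)"
proof -
  obtain B where B: "\<And>p. \<bar>f p\<bar> \<le> B" using f unfolding bcont_def bounded_real by blast
  have "continuous_on UNIV (\<lambda>p. (1 - ramp d (fst p - snd p)) * \<bar>f p\<bar>)"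
    using f continuous_on_ramp_diff[OF d] unfolding bcont_def
    by (intro continuous_on_mult continuous_on_diff continuous_on_const continuous_on_rabs) auto
  moreover have "\<bar>(1 - ramp d (fst p - snd p)) * \<bar>f p\<bar>\<bar> \<le> 1 * B" for p
  proof -
    have "0 \<le> ramp d (fst p - snd p)" "ramp d (fst p - snd p) \<le> 1"
      using d by (auto intro: ramp_nonneg ramp_le_1)
    then show ?thesis unfolding abs_mult using B[of p] by (intro mult_mono) auto
  qed
  then have "bounded (range (\<lambda>p. (1 - ramp d (fst p - snd p)) * \<bar>f p\<bar>))"
    unfolding bounded_real by blast
  ultimately show ?thesis unfolding bcont_def by blast
qed

lemma defect_bound_ramp:
  assumes f: "bcont f" and d: "0 < d"
  shows "\<bar>sint m f - comb_int2 (-1) (fst \<mu>) (snd \<mu>) (\<lambda>p. Q (fst p - snd p) * ramp d (fst p - snd p) * f p)\<bar>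
     \<le> Qnorm Q * comb_int2 1 \<nu>d \<nu>a (\<lambda>p. (1 - ramp d (fst p - snd p)) * \<bar>f p\<bar>)"
proof -
  define g where "g p = Q (fst p - snd p) * ramp d (fst p - snd p) * f p" for p
  define h where "h p = (1 - ramp d (fst p - snd p)) * \<bar>f p\<bar>" for p
  have g: "bcont g" unfolding g_def by (rule bcont_Q_ramp_mult[OF f d])
  have h: "bcont h" unfolding h_def by (rule bcont_ramp_compl_mult[OF f d])
  have Qf: "bounded_borel (Qtimes f)" by (rule bounded_borel_Qtimes[OF bcont_bounded_borel[OF f]])
  have pointwise: "\<bar>Qtimes f p - g p\<bar> \<le> Qnorm Q * h p" for p
  proof -
    have "Qtimes f p - g p = Q (fst p - snd p) * ((1 - ramp d (fst p - snd p)) * f p)"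
      unfolding Qtimes_def g_def by (simp add: algebra_simps)
    moreover have "0 \<le> 1 - ramp d (fst p - snd p)" by (simp add: ramp_le_1)
    ultimately have "\<bar>Qtimes f p - g p\<bar> = \<bar>Q (fst p - snd p)\<bar> * h p"
      by (simp add: h_def abs_mult)
    also have "\<dots> \<le> Qnorm Q * h p"
      using Q_bound \<open>0 \<le> 1 - ramp d (fst p - snd p)\<close> by (intro mult_right_mono) (auto simp: h_def)
    finally show ?thesis .
  qed
  have "\<bar>comb_int2 (-1) (fst (\<mu>s N)) (snd (\<mu>s N)) (Qtimes f) - comb_int2 (-1) (fst (\<mu>s N)) (snd (\<mu>s N)) g\<bar>
      \<le> Qnorm Q * comb_int2 1 (fst (\<mu>s N)) (snd (\<mu>s N)) h" for N
  proof -
    note PM = finite_borel_\<mu>s(1)[of N] finite_borel_\<mu>s(2)[of N]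
    have "\<bar>comb_int2 (-1) (fst (\<mu>s N)) (snd (\<mu>s N)) (Qtimes f) - comb_int2 (-1) (fst (\<mu>s N)) (snd (\<mu>s N)) g\<bar>
        = \<bar>comb_int2 (-1) (fst (\<mu>s N)) (snd (\<mu>s N)) (\<lambda>p. Qtimes f p - g p)\<bar>"
      using comb_int2_diff[OF PM Qf bcont_bounded_borel[OF g]] by simp
    also have "\<dots> \<le> comb_int2 1 (fst (\<mu>s N)) (snd (\<mu>s N)) (\<lambda>p. Qnorm Q * h p)"
      using h by (intro comb_int2_abs_le[OF PM] pointwise
          bounded_borel_mult bounded_borel_const bcont_bounded_borel) auto
    also have "\<dots> = Qnorm Q * comb_int2 1 (fst (\<mu>s N)) (snd (\<mu>s N)) h"
      by (rule comb_int2_cmult[OF PM])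
    finally show ?thesis .
  qed
  moreover have "(\<lambda>N. comb_int2 (-1) (fst (\<mu>s N)) (snd (\<mu>s N)) (Qtimes f)) \<longlonglongrightarrow> sint m f"
    using mconv[OF f] unfolding Qtimes_eq sint2_eq_comb_int2 .
  ultimately have "\<bar>sint m f - comb_int2 (-1) (fst \<mu>) (snd \<mu>) g\<bar> \<le> Qnorm Q * comb_int2 1 \<nu>d \<nu>a h"
    by (intro LIMSEQ_le[OF _ tendsto_mult[OF tendsto_const variation_square_tendsto[OF h]]])
      (auto intro!: tendsto_rabs tendsto_diff signed_square_tendsto g)
  then show ?thesis unfolding g_def h_def .
qed

lemma tendsto_Q_ramp:
  "(\<lambda>n. Q (fst p - snd p) * ramp (1 / real (Suc n)) (fst p - snd p) * f p) \<longlonglongrightarrow> Qtimes f p * indicator (-Id) p"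
proof (cases "fst p = snd p")
  case True
  then show ?thesis by (simp add: Id_fstsnd_eq)
next
  case False
  then have "eventually (\<lambda>n. Q (fst p - snd p) * ramp (1 / real (Suc n)) (fst p - snd p) * f p
      = Qtimes f p * indicator (-Id) p) sequentially"
    using ramp_eventually_1[of "fst p - snd p"] by (auto simp: Qtimes_def Id_fstsnd_eq elim!: eventually_mono)
  then show ?thesis by (rule tendsto_eventually)
qed

lemma tendsto_ramp_compl:
  "(\<lambda>n. (1 - ramp (1 / real (Suc n)) (fst p - snd p)) * \<bar>f p\<bar>) \<longlonglongrightarrow> \<bar>f p\<bar> * indicator Id p"
proof (cases "fst p = snd p")
  case True
  then show ?thesis by (simp add: Id_fstsnd_eq)
next
  case False
  then have "eventually (\<lambda>n. (1 - ramp (1 / real (Suc n)) (fst p - snd p)) * \<bar>f p\<bar>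
      = \<bar>f p\<bar> * indicator Id p) sequentially"
    using ramp_eventually_1[of "fst p - snd p"] by (auto simp: Id_fstsnd_eq elim!: eventually_mono)
  then show ?thesis by (rule tendsto_eventually)
qed

lemma comb_int2_\<mu>_off_Id:
  assumes g: "bounded_borel g"
  shows "comb_int2 s (fst \<mu>) (snd \<mu>) (\<lambda>p. g p * indicator (-Id) p) = comb_int2 s (fst \<mu>) (snd \<mu>) g"
proof -
  have "emeasure (X \<Otimes>\<^sub>M Y) Id = 0" if "X \<in> {fst \<mu>, snd \<mu>}" "Y \<in> {fst \<mu>, snd \<mu>}" for X Y
    using that mu_na finite_borel_\<mu> unfolding s_nonatomic_def
    by (auto intro: emeasure_pair_Id_nonatomic_right)
  then show ?thesis
    unfolding comb_int2_def using finite_borel_\<mu> g by (simp add: integral_off_Id)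
qed

lemma tendsto_comb_int2_Q_ramp:
  assumes f: "bcont f"
  shows "(\<lambda>n. comb_int2 (-1) (fst \<mu>) (snd \<mu>) (\<lambda>p. Q (fst p - snd p) * ramp (1 / real (Suc n)) (fst p - snd p) * f p))
     \<longlonglongrightarrow> comb_int2 (-1) (fst \<mu>) (snd \<mu>) (\<lambda>p. Qtimes f p * indicator (-Id) p)"
proof -
  obtain B where B: "\<And>p. \<bar>f p\<bar> \<le> B" using f unfolding bcont_def bounded_real by blast
  show ?thesis
  proof (rule tendsto_comb_int2_bounded[OF finite_borel_\<mu>, where B="Qnorm Q * 1 * B"])
    show "\<bar>Q (fst p - snd p) * ramp (1 / real (Suc n)) (fst p - snd p) * f p\<bar> \<le> Qnorm Q * 1 * B" for n p
      unfolding abs_mult using Q_bound B Qnorm_nonneg by (intro mult_mono) (auto simp: ramp_nonneg ramp_le_1)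
    show "(\<lambda>p. Q (fst p - snd p) * ramp (1 / real (Suc n)) (fst p - snd p) * f p) \<in> borel_measurable borel" for n
      using bcont_Q_ramp_mult[OF f, of "1 / real (Suc n)"] by (intro bounded_borel_measurable bcont_bounded_borel) simp
    show "(\<lambda>p. Qtimes f p * indicator (-Id) p) \<in> borel_measurable borel"
      using bounded_borel_Qtimes[OF bcont_bounded_borel[OF f]] Id_borel
      by (intro bounded_borel_measurable bounded_borel_mult bounded_borel_indicator borel_comp)
    show "(\<lambda>n. Q (fst p - snd p) * ramp (1 / real (Suc n)) (fst p - snd p) * f p)
        \<longlonglongrightarrow> Qtimes f p * indicator (-Id) p" for p
      by (rule tendsto_Q_ramp)
  qed
qed

lemma tendsto_comb_int2_ramp_compl:
  assumes f: "bcont f"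
  shows "(\<lambda>n. comb_int2 1 \<nu>d \<nu>a (\<lambda>p. (1 - ramp (1 / real (Suc n)) (fst p - snd p)) * \<bar>f p\<bar>))
     \<longlonglongrightarrow> comb_int2 1 \<nu>d \<nu>a (\<lambda>p. \<bar>f p\<bar> * indicator Id p)"
proof -
  obtain B where B: "\<And>p. \<bar>f p\<bar> \<le> B" using f unfolding bcont_def bounded_real by blast
  show ?thesis
  proof (rule tendsto_comb_int2_bounded[OF finite_borel_\<nu>d finite_borel_\<nu>a, where B="1 * B"])
    show "\<bar>(1 - ramp (1 / real (Suc n)) (fst p - snd p)) * \<bar>f p\<bar>\<bar> \<le> 1 * B" for n p
      unfolding abs_mult using B by (intro mult_mono) (auto simp: ramp_nonneg ramp_le_1)
    show "(\<lambda>p. (1 - ramp (1 / real (Suc n)) (fst p - snd p)) * \<bar>f p\<bar>) \<in> borel_measurable borel" for n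
      using bcont_ramp_compl_mult[OF f, of "1 / real (Suc n)"] by (intro bounded_borel_measurable bcont_bounded_borel) simp
    show "(\<lambda>p. \<bar>f p\<bar> * indicator Id p) \<in> borel_measurable borel"
      using bcont_bounded_borel[OF f] Id_borel
      by (intro bounded_borel_measurable bounded_borel_mult bounded_borel_abs bounded_borel_indicator)
    show "(\<lambda>n. (1 - ramp (1 / real (Suc n)) (fst p - snd p)) * \<bar>f p\<bar>) \<longlonglongrightarrow> \<bar>f p\<bar> * indicator Id p" for p
      by (rule tendsto_ramp_compl)
  qed
qed

lemma defect_bound_bcont:
  assumes f: "bcont f"
  shows "\<bar>sint m f - comb_int2 (-1) (fst \<mu>) (snd \<mu>) (Qtimes f)\<bar>
    \<le> Qnorm Q * comb_int2 1 \<nu>d \<nu>a (\<lambda>p. \<bar>f p\<bar> * indicator Id p)"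
proof -
  have "\<bar>sint m f - comb_int2 (-1) (fst \<mu>) (snd \<mu>) (\<lambda>p. Qtimes f p * indicator (-Id) p)\<bar>
      \<le> Qnorm Q * comb_int2 1 \<nu>d \<nu>a (\<lambda>p. \<bar>f p\<bar> * indicator Id p)"
    by (rule LIMSEQ_le[OF tendsto_rabs[OF tendsto_diff[OF tendsto_const tendsto_comb_int2_Q_ramp[OF f]]]
          tendsto_mult[OF tendsto_const tendsto_comb_int2_ramp_compl[OF f]]])
      (use defect_bound_ramp[OF f] in simp)
  then show ?thesis
    using comb_int2_\<mu>_off_Id[OF bounded_borel_Qtimes[OF bcont_bounded_borel[OF f]]] by simp
qed

definition defect :: "((real^2) \<times> (real^2)) set \<Rightarrow> real" where
  "defect A = smeas m A - comb_int2 (-1) (fst \<mu>) (snd \<mu>) (Qtimes (indicator A))"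

definition \<nu>2 :: "((real^2) \<times> (real^2)) set \<Rightarrow> real" where
  "\<nu>2 B = comb_int2 1 \<nu>d \<nu>a (indicator B)"

lemma \<nu>2_eq: "\<nu>2 B = measure (\<nu>d \<Otimes>\<^sub>M \<nu>d) B + measure (\<nu>d \<Otimes>\<^sub>M \<nu>a) B
    + measure (\<nu>a \<Otimes>\<^sub>M \<nu>d) B + measure (\<nu>a \<Otimes>\<^sub>M \<nu>a) B"
  unfolding \<nu>2_def comb_int2_indicator[OF finite_borel_\<nu>d finite_borel_\<nu>a] by simp

lemma \<nu>2_mono: "B \<subseteq> C \<Longrightarrow> C \<in> sets borel \<Longrightarrow> \<nu>2 B \<le> \<nu>2 C"
  unfolding \<nu>2_eq using finite_borel_\<nu>d finite_borel_\<nu>a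
  by (intro add_mono finite_borel_measure_mono finite_borel_pair) auto

lemma defect_bound_closed:
  assumes S: "closed S"
  shows "\<bar>defect S\<bar> \<le> Qnorm Q * \<nu>2 (S \<inter> Id)"
proof -
  have Sb: "S \<in> sets borel" using S by (rule borel_closed)
  have approx: "bounded_borel (indicator_approx S n)" for n
    by (rule bcont_bounded_borel[OF bcont_indicator_approx])
  note approx_range = indicator_approx_range[of S]
  have "(\<lambda>n. comb_int (-1) (fst m) (snd m) (indicator_approx S n)) \<longlonglongrightarrow> comb_int (-1) (fst m) (snd m) (indicator S)"
    by (rule tendsto_comb_int_indicator_approx[OF finite_borel_m S])
  then have lim_m: "(\<lambda>n. sint m (indicator_approx S n)) \<longlonglongrightarrow> smeas m S"
    unfolding sint_eq_comb_int comb_int_indicator[OF finite_borel_m] smeas_def by simp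
  have lim_\<mu>: "(\<lambda>n. comb_int2 (-1) (fst \<mu>) (snd \<mu>) (Qtimes (indicator_approx S n)))
      \<longlonglongrightarrow> comb_int2 (-1) (fst \<mu>) (snd \<mu>) (Qtimes (indicator S))"
  proof (rule tendsto_comb_int2_bounded[OF finite_borel_\<mu>, where B="Qnorm Q * 1"])
    show "Qtimes (indicator_approx S n) \<in> borel_measurable borel" for n
      by (intro bounded_borel_measurable bounded_borel_Qtimes approx)
    show "Qtimes (indicator S) \<in> borel_measurable borel"
      using Sb by (intro bounded_borel_measurable bounded_borel_Qtimes bounded_borel_indicator)
    show "\<bar>Qtimes (indicator_approx S n) p\<bar> \<le> Qnorm Q * 1" for n p
      unfolding Qtimes_def abs_mult using approx_range Q_bound Qnorm_nonneg by (intro mult_mono) auto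
    show "(\<lambda>n. Qtimes (indicator_approx S n) p) \<longlonglongrightarrow> Qtimes (indicator S) p" for p
      unfolding Qtimes_def by (intro tendsto_mult tendsto_const tendsto_indicator_approx[OF S])
  qed
  have lim_\<nu>: "(\<lambda>n. comb_int2 1 \<nu>d \<nu>a (\<lambda>p. \<bar>indicator_approx S n p\<bar> * indicator Id p))
      \<longlonglongrightarrow> \<nu>2 (S \<inter> Id)"
    unfolding \<nu>2_def
  proof (rule tendsto_comb_int2_bounded[OF finite_borel_\<nu>d finite_borel_\<nu>a, where B=1])
    show "(\<lambda>p. \<bar>indicator_approx S n p\<bar> * indicator Id p) \<in> borel_measurable borel" for n
      using Id_borel by (intro bounded_borel_measurable bounded_borel_mult bounded_borel_abs
          bounded_borel_indicator approx)
    show "(indicator (S \<inter> Id) :: _ \<Rightarrow> real) \<in> borel_measurable borel"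
      using Sb Id_borel by (intro bounded_borel_measurable bounded_borel_indicator sets.Int)
    show "\<bar>\<bar>indicator_approx S n p\<bar> * indicator Id p\<bar> \<le> 1" for n p
      using approx_range[of n p] by (simp add: indicator_def)
    show "(\<lambda>n. \<bar>indicator_approx S n p\<bar> * indicator Id p) \<longlonglongrightarrow> indicator (S \<inter> Id) p" for p
      using approx_range tendsto_mult[OF tendsto_indicator_approx[OF S] tendsto_const, of p "indicator Id p"]
      by (simp add: indicator_inter_arith)
  qed
  show ?thesis
    unfolding defect_def
    by (rule LIMSEQ_le[OF tendsto_rabs[OF tendsto_diff[OF lim_m lim_\<mu>]] tendsto_mult[OF tendsto_const lim_\<nu>]])
      (use defect_bound_bcont[OF bcont_indicator_approx] in blast)
qed

lemma defect_Diff: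
  assumes A: "A \<in> sets borel" and K: "K \<in> sets borel" and KA: "K \<subseteq> A"
  shows "defect A = defect K + defect (A - K)"
proof -
  have "Qtimes (indicator A) = (\<lambda>p. Qtimes (indicator K) p + Qtimes (indicator (A - K)) p)"
    unfolding Qtimes_def using KA by (auto simp: fun_eq_iff indicator_def)
  then have "comb_int2 (-1) (fst \<mu>) (snd \<mu>) (Qtimes (indicator A)) =
      comb_int2 (-1) (fst \<mu>) (snd \<mu>) (Qtimes (indicator K)) + comb_int2 (-1) (fst \<mu>) (snd \<mu>) (Qtimes (indicator (A - K)))"
    using A K by (simp add: comb_int2_add[OF finite_borel_\<mu>] bounded_borel_Qtimes bounded_borel_indicator)
  then show ?thesis
    unfolding defect_def smeas_def
    using finite_borel_measure_Diff[OF finite_borel_m(1) A K KA] finite_borel_measure_Diff[OF finite_borel_m(2) A K KA]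
    by simp
qed

lemma defect_bound_masses:
  assumes B: "B \<in> sets borel"
  shows "\<bar>defect B\<bar> \<le> measure (fst m) B + measure (snd m) B + Qnorm Q * (measure (fst \<mu> \<Otimes>\<^sub>M fst \<mu>) B
     + measure (fst \<mu> \<Otimes>\<^sub>M snd \<mu>) B + measure (snd \<mu> \<Otimes>\<^sub>M fst \<mu>) B + measure (snd \<mu> \<Otimes>\<^sub>M snd \<mu>) B)"
proof -
  have "\<bar>comb_int2 (-1) (fst \<mu>) (snd \<mu>) (Qtimes (indicator B))\<bar> \<le> comb_int2 1 (fst \<mu>) (snd \<mu>) (\<lambda>p. Qnorm Q * indicator B p)"
  proof (rule comb_int2_abs_le[OF finite_borel_\<mu>])
    show "bounded_borel (\<lambda>p. Qnorm Q * indicator B p)"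
      using B by (intro bounded_borel_mult bounded_borel_const bounded_borel_indicator)
    show "\<bar>Qtimes (indicator B) p\<bar> \<le> Qnorm Q * indicator B p" for p
      unfolding Qtimes_def abs_mult using Q_bound[of "fst p - snd p"] by (auto simp: indicator_def)
  qed simp
  also have "\<dots> = Qnorm Q * (measure (fst \<mu> \<Otimes>\<^sub>M fst \<mu>) B
     + measure (fst \<mu> \<Otimes>\<^sub>M snd \<mu>) B + measure (snd \<mu> \<Otimes>\<^sub>M fst \<mu>) B + measure (snd \<mu> \<Otimes>\<^sub>M snd \<mu>) B)"
    unfolding comb_int2_cmult[OF finite_borel_\<mu>] comb_int2_indicator[OF finite_borel_\<mu>] by simp
  finally show ?thesis
    unfolding defect_def smeas_def
    using measure_nonneg[of "fst m" B] measure_nonneg[of "snd m" B] by linarith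
qed

text \<open>Inner regularity of the six finite measures involved extends the bound from closed
  to Borel sets.\<close>

lemma defect_bound:
  assumes A: "A \<in> sets borel"
  shows "\<bar>defect A\<bar> \<le> Qnorm Q * \<nu>2 (A \<inter> Id)"
proof (rule field_le_epsilon)
  fix e :: real
  assume e: "0 < e"
  define e' where "e' = e / (2 + 4 * Qnorm Q)"
  have e': "0 < e'" "(2 + 4 * Qnorm Q) * e' = e"
    unfolding e'_def using e Qnorm_nonneg by auto
  define \<M> where "\<M> = {fst m, snd m, fst \<mu> \<Otimes>\<^sub>M fst \<mu>, fst \<mu> \<Otimes>\<^sub>M snd \<mu>, snd \<mu> \<Otimes>\<^sub>M fst \<mu>, snd \<mu> \<Otimes>\<^sub>M snd \<mu>}"
  have "X \<in> \<M> \<Longrightarrow> finite_borel X" for X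
    unfolding \<M>_def using finite_borel_m finite_borel_\<mu> by (auto intro: finite_borel_pair)
  then obtain K where K: "compact K" "K \<subseteq> A" "\<forall>X\<in>\<M>. measure X (A - K) < e'"
    using inner_regular_finite_borel_simultaneous[of \<M> A e'] A e' unfolding \<M>_def by auto
  have Kb: "K \<in> sets borel" using K(1) by (simp add: borel_compact)
  have "\<bar>defect K\<bar> \<le> Qnorm Q * \<nu>2 (A \<inter> Id)"
  proof -
    have "\<bar>defect K\<bar> \<le> Qnorm Q * \<nu>2 (K \<inter> Id)"
      by (rule defect_bound_closed[OF compact_imp_closed[OF K(1)]])
    also have "\<dots> \<le> Qnorm Q * \<nu>2 (A \<inter> Id)"
      using K(2) A Id_borel by (intro mult_left_mono \<nu>2_mono Qnorm_nonneg) auto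
    finally show ?thesis .
  qed
  moreover have "\<bar>defect (A - K)\<bar> \<le> e' + e' + Qnorm Q * (e' + e' + e' + e')"
  proof -
    have small: "measure X (A - K) \<le> e'" if "X \<in> \<M>" for X
      using K(3) that by (simp add: less_imp_le)
    have "\<bar>defect (A - K)\<bar> \<le> measure (fst m) (A - K) + measure (snd m) (A - K)
      + Qnorm Q * (measure (fst \<mu> \<Otimes>\<^sub>M fst \<mu>) (A - K) + measure (fst \<mu> \<Otimes>\<^sub>M snd \<mu>) (A - K)
      + measure (snd \<mu> \<Otimes>\<^sub>M fst \<mu>) (A - K) + measure (snd \<mu> \<Otimes>\<^sub>M snd \<mu>) (A - K))"
      using A Kb by (intro defect_bound_masses) auto
    also have "\<dots> \<le> e' + e' + Qnorm Q * (e' + e' + e' + e')"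
      using small unfolding \<M>_def by (intro add_mono mult_left_mono Qnorm_nonneg) auto
    finally show ?thesis .
  qed
  ultimately show "\<bar>defect A\<bar> \<le> Qnorm Q * \<nu>2 (A \<inter> Id) + e"
    using defect_Diff[OF A Kb K(2)] e'(2) by (simp add: algebra_simps)
qed

definition atoms :: "nat \<Rightarrow> ((real^2) \<times> (real^2)) set" where
  "atoms n = (\<lambda>j. (z j, z j)) ` {..<n}"

lemma atoms_borel: "atoms n \<in> sets borel"
  unfolding atoms_def by (intro borel_closed finite_imp_closed) auto

lemma \<nu>2_atom: "\<nu>2 {(z j, z j)} = (\<gamma> j)^2"
proof -
  have zb: "{z j} \<in> sets borel" by simp
  have "measure \<nu>d {z j} = 0" using nud(3)[of "z j"] by (simp add: measure_def)
  then show ?thesis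
    using finite_borel_measure_Times[OF _ _ zb zb] finite_borel_\<nu>d finite_borel_\<nu>a
    by (simp add: \<nu>2_eq measure_\<nu>a_atom power2_eq_square)
qed

lemma measure_Id_outside_atoms:
  assumes X: "X \<in> {\<nu>d \<Otimes>\<^sub>M \<nu>d, \<nu>d \<Otimes>\<^sub>M \<nu>a, \<nu>a \<Otimes>\<^sub>M \<nu>d, \<nu>a \<Otimes>\<^sub>M \<nu>a}"
  shows "measure X (Id - range (\<lambda>j. (z j, z j))) = 0"
proof -
  note fin = finite_borel_\<nu>d finite_borel_\<nu>a
  have fX: "finite_borel X" using X fin by (auto intro: finite_borel_pair)
  have "measure X (Id - range (\<lambda>j. (z j, z j))) \<le> 0"
  proof (cases "X = \<nu>a \<Otimes>\<^sub>M \<nu>a")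
    case True
    have "range z \<in> sets borel" by (rule sets.countable) auto
    then have outside: "- range z \<in> sets borel" by (rule borel_comp)
    have "UNIV \<times> - range z \<in> sets (\<nu>a \<Otimes>\<^sub>M \<nu>a)"
      using outside fin(2) by (intro pair_measureI) (auto simp: finite_borel_def)
    then have rect: "(UNIV :: (real^2) set) \<times> - range z \<in> sets borel"
      using fX unfolding True finite_borel_def by simp
    have "measure X (Id - range (\<lambda>j. (z j, z j))) \<le> measure X (UNIV \<times> - range z)"
      using fX rect by (intro finite_borel_measure_mono) auto
    also have "\<dots> = measure \<nu>a UNIV * measure \<nu>a (- range z)"
      unfolding True using fin(2) outside by (intro finite_borel_measure_Times) auto
    also have "\<dots> = 0" using emeasure_\<nu>a_outside by (simp add: measure_def)
    finally show ?thesis .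
  next
    case False
    with X consider "X = \<nu>d \<Otimes>\<^sub>M \<nu>d" | "X = \<nu>d \<Otimes>\<^sub>M \<nu>a" | "X = \<nu>a \<Otimes>\<^sub>M \<nu>d" by blast
    then have "emeasure X Id = 0"
    proof cases
      case 1
      then show ?thesis using emeasure_pair_Id_nonatomic_right[OF fin(1) fin(1) nud(3)] by simp
    next
      case 2
      then show ?thesis using emeasure_pair_Id_nonatomic_left[OF fin(1) fin(2) nud(3)] by simp
    next
      case 3
      then show ?thesis using emeasure_pair_Id_nonatomic_right[OF fin(2) fin(1) nud(3)] by simp
    qed
    then show ?thesis
      using finite_borel_measure_mono[OF fX Diff_subset Id_borel] by (simp add: measure_def)
  qed
  then show ?thesis using measure_nonneg[of X] by (simp add: antisym)
qed

lemma \<nu>2_tail: "(\<lambda>n. \<nu>2 (Id - atoms n)) \<longlonglongrightarrow> 0"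
proof -
  have lim: "(\<lambda>n. measure X (Id - atoms n)) \<longlonglongrightarrow> 0"
    if X: "X \<in> {\<nu>d \<Otimes>\<^sub>M \<nu>d, \<nu>d \<Otimes>\<^sub>M \<nu>a, \<nu>a \<Otimes>\<^sub>M \<nu>d, \<nu>a \<Otimes>\<^sub>M \<nu>a}" for X
  proof -
    have fX: "finite_borel X"
      using X finite_borel_\<nu>d finite_borel_\<nu>a by (auto intro: finite_borel_pair)
    interpret finite_measure X using fX by (simp add: finite_borel_def)
    have "(\<lambda>n. measure X (Id - atoms n)) \<longlonglongrightarrow> measure X (\<Inter>n. Id - atoms n)"
    proof (rule finite_Lim_measure_decseq)
      have "Id - atoms n \<in> sets borel" for n using Id_borel atoms_borel by (rule sets.Diff)
      then show "range (\<lambda>n. Id - atoms n) \<subseteq> sets X"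
        using fX by (auto simp: finite_borel_def)
      show "decseq (\<lambda>n. Id - atoms n)"
        unfolding decseq_def atoms_def by auto
    qed
    moreover have "(\<Inter>n. Id - atoms n) = Id - range (\<lambda>j. (z j, z j))"
      unfolding atoms_def by auto
    ultimately show ?thesis using measure_Id_outside_atoms[OF X] by simp
  qed
  have "(\<lambda>n. \<nu>2 (Id - atoms n)) \<longlonglongrightarrow> 0 + 0 + 0 + 0"
    unfolding \<nu>2_eq by (intro tendsto_add lim) auto
  then show ?thesis by simp
qed

lemma defect_empty: "defect {} = 0"
proof -
  have "Qtimes (indicator {}) = (\<lambda>_. 0)" by (simp add: Qtimes_def fun_eq_iff)
  then show ?thesis by (simp add: defect_def smeas_def comb_int2_def)
qed

definition atom_weight :: "nat \<Rightarrow> real" where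
  "atom_weight j = defect {(z j, z j)}"

lemma atom_weight_bound: "\<bar>atom_weight j\<bar> \<le> Qnorm Q * \<bar>\<gamma> j\<bar>\<^sup>2"
  using defect_bound[of "{(z j, z j)}"] by (simp add: atom_weight_def \<nu>2_atom)

lemma defect_split:
  assumes A: "A \<in> sets borel"
  shows "defect A = defect (A - atoms n) + (\<Sum>j<n. atom_weight j * indicator A (z j, z j))"
proof (induction n)
  case 0
  then show ?case by (simp add: atoms_def)
next
  case (Suc n)
  define K where "K = (A - atoms n) \<inter> {(z n, z n)}"
  have An: "A - atoms n \<in> sets borel" using A atoms_borel by auto
  have "(z n, z n) \<notin> atoms n" unfolding atoms_def using z_inj by (auto simp: inj_def)
  then have "defect K = atom_weight n * indicator A (z n, z n)"
    by (cases "(z n, z n) \<in> A") (auto simp: K_def atom_weight_def defect_empty)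
  moreover have "A - atoms n - K = A - atoms (Suc n)"
    unfolding K_def atoms_def by (auto simp: lessThan_Suc)
  ultimately have "defect (A - atoms n) = atom_weight n * indicator A (z n, z n) + defect (A - atoms (Suc n))"
    using defect_Diff[OF An _, of K] An by (auto simp: K_def)
  then show ?case using Suc.IH by simp
qed

lemma defect_sums:
  assumes A: "A \<in> sets borel"
  shows "(\<lambda>j. atom_weight j * indicator A (z j, z j)) sums defect A"
proof -
  have bound: "\<bar>defect (A - atoms n)\<bar> \<le> Qnorm Q * \<nu>2 (Id - atoms n)" for n
  proof -
    have "\<bar>defect (A - atoms n)\<bar> \<le> Qnorm Q * \<nu>2 ((A - atoms n) \<inter> Id)"
      using A atoms_borel by (intro defect_bound) auto
    also have "\<dots> \<le> Qnorm Q * \<nu>2 (Id - atoms n)"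
      using Id_borel atoms_borel by (intro mult_left_mono \<nu>2_mono Qnorm_nonneg) auto
    finally show ?thesis .
  qed
  have "(\<lambda>n. defect (A - atoms n)) \<longlonglongrightarrow> 0"
  proof (rule Lim_null_comparison)
    show "\<forall>\<^sub>F n in sequentially. norm (defect (A - atoms n)) \<le> Qnorm Q * \<nu>2 (Id - atoms n)"
      using bound by (intro always_eventually allI) simp
    show "(\<lambda>n. Qnorm Q * \<nu>2 (Id - atoms n)) \<longlonglongrightarrow> 0"
      using tendsto_mult[OF tendsto_const \<nu>2_tail, of "Qnorm Q"] by simp
  qed
  then have "(\<lambda>n. defect A - defect (A - atoms n)) \<longlonglongrightarrow> defect A - 0"
    by (intro tendsto_diff tendsto_const)
  moreover have "(\<Sum>j<n. atom_weight j * indicator A (z j, z j)) = defect A - defect (A - atoms n)" for n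
    using defect_split[OF A, of n] by simp
  ultimately show ?thesis unfolding sums_def by simp
qed

lemma \<gamma>_eq_0_if_nonneg:
  assumes pos: "\<forall>N A. emeasure (snd (\<mu>s N)) A = 0"
  shows "\<gamma> j = 0"
proof -
  have same: "comb_int (-1) (fst \<mu>) (snd \<mu>) f = comb_int 1 \<nu>d \<nu>a f" if f: "bcont f" for f
  proof -
    have "comb_int (-1) (fst (\<mu>s N)) (snd (\<mu>s N)) f = comb_int 1 (fst (\<mu>s N)) (snd (\<mu>s N)) f" for N
      using integral_null_measure[of "snd (\<mu>s N)" f] pos by (simp add: comb_int_def)
    then show ?thesis
      using LIMSEQ_unique[OF signed_tendsto[OF f]] variation_tendsto[OF f] by simp
  qed
  define S where "S = {z j}"
  have S: "closed S" "S \<in> sets borel" by (simp_all add: S_def)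
  note lim = tendsto_comb_int_indicator_approx[OF _ _ S(1)]
  have "(\<lambda>n. comb_int (-1) (fst \<mu>) (snd \<mu>) (indicator_approx S n)) = (\<lambda>n. comb_int 1 \<nu>d \<nu>a (indicator_approx S n))"
    using same[OF bcont_indicator_approx] by simp
  then have "(\<lambda>n. comb_int 1 \<nu>d \<nu>a (indicator_approx S n)) \<longlonglongrightarrow> comb_int (-1) (fst \<mu>) (snd \<mu>) (indicator S)"
    using lim[OF finite_borel_\<mu>, of "-1"] by simp
  then have "comb_int (-1) (fst \<mu>) (snd \<mu>) (indicator S) = comb_int 1 \<nu>d \<nu>a (indicator S)"
    using lim[OF finite_borel_\<nu>d finite_borel_\<nu>a, of 1] by (rule LIMSEQ_unique)
  moreover have "measure (fst \<mu>) S = 0" "measure (snd \<mu>) S = 0"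
    using mu_na by (simp_all add: s_nonatomic_def S_def measure_def)
  moreover have "measure \<nu>d S = 0"
    using nud(3) by (simp add: S_def measure_def)
  ultimately show ?thesis
    using comb_int_indicator[OF finite_borel_\<mu>, of "-1" S]
      comb_int_indicator[OF finite_borel_\<nu>d finite_borel_\<nu>a, of 1 S] measure_\<nu>a_atom[of j]
    unfolding S_def by simp
qed

lemma smeas_eq_atoms:
  assumes A: "A \<in> sets borel"
  shows "smeas m A = sint2 \<mu> (\<lambda>(x, y). Q (x - y) * indicator A (x, y)) + (\<Sum>j. atom_weight j * indicator A (z j, z j))"
  using sums_unique[OF defect_sums[OF A]]
  unfolding defect_def sint2_eq_comb_int2 Qtimes_eq by simp

end

theorem lemma6p3:
  fixes \<mu>s :: "nat \<Rightarrow> (real^2) measure \<times> (real^2) measure"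
    and \<mu> :: "(real^2) measure \<times> (real^2) measure"
    and \<nu>d :: "(real^2) measure"
    and \<gamma> :: "nat \<Rightarrow> real" and z :: "nat \<Rightarrow> real^2"
    and Q :: "real^2 \<Rightarrow> real"
    and m :: "((real^2) \<times> (real^2)) measure \<times> ((real^2) \<times> (real^2)) measure"
  assumes mus: "\<And>N. signed_meas (\<mu>s N)"
    and mu: "signed_meas \<mu>" and mu_na: "s_nonatomic \<mu>"
    and conv: "\<And>f. bcont f \<Longrightarrow> (\<lambda>N. sint (\<mu>s N) f) \<longlonglongrightarrow> sint \<mu> f"
    and nud: "finite_measure \<nu>d" "sets \<nu>d = sets borel" "\<And>x. emeasure \<nu>d {x} = 0"
    and gamma: "\<And>j. \<gamma> j \<ge> 0" "summable \<gamma>" and z_inj: "inj z"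
    and vconv: "\<And>f. bcont f \<Longrightarrow>
        (\<lambda>N. var_int (\<mu>s N) f) \<longlonglongrightarrow> (\<integral>x. f x \<partial>\<nu>d) + (\<Sum>j. \<gamma> j * f (z j))"
    and Qcont: "continuous_on (-{0}) Q" and Qbdd: "bounded (Q ` (-{0}))"
    and Q0: "\<bar>Q 0\<bar> \<le> Qnorm Q"
    and m: "signed_meas m"
    and mconv: "\<And>f. bcont f \<Longrightarrow>
        (\<lambda>N. sint2 (\<mu>s N) (\<lambda>(x, y). Q (x - y) * f (x, y))) \<longlonglongrightarrow> sint m f"
  shows "(\<exists>c :: nat \<Rightarrow> real.
            (\<forall>j. \<bar>c j\<bar> \<le> Qnorm Q * \<bar>\<gamma> j\<bar>\<^sup>2) \<and>
            (\<forall>A\<in>sets borel. smeas m A =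
               sint2 \<mu> (\<lambda>(x, y). Q (x - y) * indicator A (x, y))
               + (\<Sum>j. c j * indicator A (z j, z j))))
       \<and> ((\<forall>N A. emeasure (snd (\<mu>s N)) A = 0) \<longrightarrow>
            (\<forall>A\<in>sets borel. smeas m A =
               sint2 \<mu> (\<lambda>(x, y). Q (x - y) * indicator A (x, y))))"
proof -
  interpret quadratic_limit \<mu>s \<mu> \<nu>d \<gamma> z Q m
    by (rule quadratic_limit.intro[OF mus mu mu_na conv nud gamma z_inj vconv Qcont Qbdd Q0 m mconv])
  have "\<exists>c :: nat \<Rightarrow> real. (\<forall>j. \<bar>c j\<bar> \<le> Qnorm Q * \<bar>\<gamma> j\<bar>\<^sup>2) \<and>
      (\<forall>A\<in>sets borel. smeas m A = sint2 \<mu> (\<lambda>(x, y). Q (x - y) * indicator A (x, y))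
         + (\<Sum>j. c j * indicator A (z j, z j)))"
    using atom_weight_bound smeas_eq_atoms by blast
  moreover have "smeas m A = sint2 \<mu> (\<lambda>(x, y). Q (x - y) * indicator A (x, y))"
    if "\<forall>N A. emeasure (snd (\<mu>s N)) A = 0" "A \<in> sets borel" for A
  proof -
    have "atom_weight j = 0" for j
      using atom_weight_bound[of j] \<gamma>_eq_0_if_nonneg[OF that(1), of j] by simp
    then show ?thesis using smeas_eq_atoms[OF that(2)] by simp
  qed
  ultimately show ?thesis by blast
qed

end
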